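(* Let $K\ge 1$ be an integer, let $\underline{A}\in\mathbb{R}^{K\times K}$ be a symmetric, negative definite, $m$-banded matrix, and let $\underline{P}=[p_{i,j}]\in\mathbb{R}^{K\times K}$. Let $a=\lambda_{\min}(\underline{A})<0$, $b=\lambda_{\max}(\underline{A})<0$, $\kappa=a/b$, and set $m_1=Km$, $$\tau_1=\frac{1}{2|b|}\max\Big\{1,\frac{(1+\sqrt{\kappa})^2}{2\kappa}\Big\},\qquad \rho_1=\Big(\frac{\sqrt{\kappa}-1}{\sqrt{\kappa}+1}\Big)^{2/m_1}.$$ For $i,j\in\{1,\dots,K\}$ let $\underline{X}_{i,j}\in\mathbb{R}^{K\times K}$ be the unique solution of $\underline{A}\underline{X}_{i,j}+\underline{X}_{i,j}\underline{A}=\mathbf{q}_i p_{i,j}\mathbf{q}_j^T$, let $\overline{\mathbf{x}}_{i,j}=\mathrm{vec}(\underline{X}_{i,j})$ and denote its $s$-th entry ($s=1,\dots,K^2$) by $\overline{x}^{i,j}_s$. Let $\phi(i,j)=(j-1)K+i$. Then for all $i,j,s$, $$|\overline{x}^{i,j}_s|\le |p_{i,j}|\,\tau_1\,\rho_1^{|\phi(i,j)-s|}.$$ Moreover, if $\underline{X}$ is the unique solution of $\underline{A}\underline{X}+\underline{X}\underline{A}=\underline{P}$ and $\overline{x}_s$ denotes the $s$-th entry of $\mathrm{vec}(\underline{X})$, then $$|\overline{x}_s|\le \tau_1\sum_{i=1}^{K}\sum_{j=1}^{K}|p_{i,j}|\,\rho_1^{|\phi(i,j)-s|}\quad\text{for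 all } s=1,\dots,K^2.$$
   Context: A $K\times K$ matrix $Z=[z_{i,j}]$ is called $s$-banded (bandwidth $s$, $s$ an even positive integer) if $z_{i,j}=0$ whenever $|i-j|>s/2$. $\mathbf{q}_j\in\mathbb{R}^K$ denotes the $j$-th standard basis vector (all zeros except a $1$ in position $j$). $\mathrm{vec}(\cdot)$ is the standard column-stacking operator. $\lambda_{\min},\lambda_{\max}$ denote the minimal and maximal eigenvalues. *)

theory Defs
  imports "Jordan_Normal_Form.Matrix" "Jordan_Normal_Form.Char_Poly"
begin

(* square K x K real matrices are Jordan_Normal_Form matrices in carrier_mat K K;
   indices are 0-based: rows/columns 0..K-1, vec-entries 0..K^2-1 *)

definition banded :: "nat \<Rightarrow> real mat \<Rightarrow> bool" where
  "banded s Z \<longleftrightarrow> (\<forall>i<dim_row Z. \<forall>j<dim_col Z.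
      real s / 2 < \<bar>real i - real j\<bar> \<longrightarrow> Z $$ (i, j) = 0)"

definition symmetric_mat :: "real mat \<Rightarrow> bool" where
  "symmetric_mat Z \<longleftrightarrow> transpose_mat Z = Z"

definition negative_definite :: "real mat \<Rightarrow> bool" where
  "negative_definite Z \<longleftrightarrow>
     (\<forall>x \<in> carrier_vec (dim_row Z). x \<noteq> 0\<^sub>v (dim_row Z) \<longrightarrow> x \<bullet> (Z *\<^sub>v x) < 0)"

definition lambda_min :: "real mat \<Rightarrow> real" where
  "lambda_min Z = Min {x. eigenvalue Z x}"

definition lambda_max :: "real mat \<Rightarrow> real" where
  "lambda_max Z = Max {x. eigenvalue Z x}"

definition qcol :: "nat \<Rightarrow> nat \<Rightarrow> real mat" where
  "qcol K j = mat_of_cols K [unit_vec K j]"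

(* column-stacking vec, 0-based: entry s of vec(X) *)
definition vec_entry :: "nat \<Rightarrow> real mat \<Rightarrow> nat \<Rightarrow> real" where
  "vec_entry K X s = X $$ (s mod K, s div K)"

(* phi(i,j) = (j-1)K + i in 1-based indexing; 0-based version: j*K + i *)
definition phi :: "nat \<Rightarrow> nat \<Rightarrow> nat \<Rightarrow> nat" where
  "phi K i j = j * K + i"

definition tau1 :: "real \<Rightarrow> real \<Rightarrow> real" where
  "tau1 a b = (let \<kappa> = a / b in
     (1 / (2 * \<bar>b\<bar>)) * max 1 ((1 + sqrt \<kappa>)^2 / (2 * \<kappa>)))"

definition rho1 :: "nat \<Rightarrow> nat \<Rightarrow> real \<Rightarrow> real \<Rightarrow> real" where
  "rho1 K m a b = (let \<kappa> = a / b in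
     ((sqrt \<kappa> - 1) / (sqrt \<kappa> + 1)) powr (2 / real (K * m)))"

end

theory Submission
  imports Defs
begin

text \<open>
Column stacking turns the Lyapunov equation \<open>AX + XA = P\<close> into a linear system whose matrix
\<open>M = -(I \<otimes> A + A \<otimes> I)\<close> is symmetric, has bandwidth \<open>K m/2\<close>, and has spectrum in
\<open>[2|b|, 2|a|]\<close>. For such a matrix the entries of \<open>M\<^sup>-\<^sup>1\<close> decay exponentially away from the
diagonal (Demko--Moss--Smith): if \<open>p\<close> has degree \<open>k\<close>, then \<open>p(M)\<close> has bandwidth \<open>k K m/2\<close>, so
far from the diagonal the entries of \<open>M\<^sup>-\<^sup>1\<close> coincide with those of \<open>M\<^sup>-\<^sup>1 - p(M) = r(M) M\<^sup>-\<^sup>1\<close>,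
where \<open>r(x) = 1 - x p(x)\<close>. Choosing \<open>r\<close> as a normalised Chebyshev-type polynomial on the spectral
interval gives \<open>|r(x)| \<le> E\<^sub>k x\<close> there with \<open>E\<^sub>k\<close> of order \<open>q\<^sup>k\<^sup>+\<^sup>1\<close>,
\<open>q = (\<surd>\<kappa> - 1)/(\<surd>\<kappa> + 1)\<close>, and hence \<open>\<parallel>r(M) M\<^sup>-\<^sup>1 e\<^sub>t\<parallel> \<le> E\<^sub>k\<close>. The bound on \<open>|r|\<close> is
certified by a polynomial identity \<open>E\<^sup>2x\<^sup>2 - r\<^sup>2 = c (G\<^sup>2 - (L G)\<^sup>2)\<close> with \<open>L\<close> the affine map of the
spectral interval onto \<open>[-1, 1]\<close>, which transfers to \<open>M\<close> through quadratic forms. The second claim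
follows by superposition over the entries of \<open>P\<close>.
\<close>

section \<open>Real vectors and symmetric matrices\<close>

lemma scalar_prod_self_nonneg: "0 \<le> (v::real vec) \<bullet> v"
  using conjugate_square_ge_0_vec[of v] by simp

lemma scalar_prod_self_eq_0D: "(v::real vec) \<in> carrier_vec n \<Longrightarrow> v \<bullet> v = 0 \<Longrightarrow> v = 0\<^sub>v n"
  using conjugate_square_eq_0_vec[of v n] by simp

lemma scalar_prod_self_pos: "(v::real vec) \<in> carrier_vec n \<Longrightarrow> v \<noteq> 0\<^sub>v n \<Longrightarrow> 0 < v \<bullet> v"
  using conjugate_square_greater_0_vec[of v n] by simp

lemma vec_index_sq_le: "i < dim_vec v \<Longrightarrow> (v $ i)^2 \<le> (v::real vec) \<bullet> v"
  unfolding scalar_prod_def power2_eq_square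
  by (rule member_le_sum[of i "{0..<dim_vec v}" "\<lambda>i. v$i * v$i", simplified]) auto

lemma cauchy_schwarz_scalar_prod: assumes v: "(v::real vec) \<in> carrier_vec n" and w: "w \<in> carrier_vec n"
  shows "(v \<bullet> w)^2 \<le> (v \<bullet> v) * (w \<bullet> w)"
proof (cases "w \<bullet> w = 0")
  case True
  then have "w = 0\<^sub>v n" using scalar_prod_self_eq_0D w by blast
  then show ?thesis using v by simp
next
  case False
  then have pos: "w \<bullet> w > 0" using scalar_prod_self_nonneg[of w] by linarith
  define t where "t = (v \<bullet> w) / (w \<bullet> w)"
  have "0 \<le> (v - t \<cdot>\<^sub>v w) \<bullet> (v - t \<cdot>\<^sub>v w)" by (rule scalar_prod_self_nonneg)
  also have "\<dots> = v \<bullet> v - 2 * t * (v \<bullet> w) + t * t * (w \<bullet> w)"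
    using v w by (simp add: minus_scalar_prod_distrib scalar_prod_minus_distrib comm_scalar_prod[of w n v] algebra_simps)
  also have "\<dots> = v \<bullet> v - (v \<bullet> w)^2 / (w \<bullet> w)"
    using pos unfolding t_def by (simp add: field_simps power2_eq_square)
  finally have "(v \<bullet> w)^2 / (w \<bullet> w) \<le> v \<bullet> v" by simp
  then show ?thesis using pos by (simp add: field_simps)
qed

lemma symmetric_mat_scalar_prod_swap: assumes C: "C \<in> carrier_mat n n" "symmetric_mat C" and v: "v \<in> carrier_vec n" and w: "w \<in> carrier_vec n"
  shows "v \<bullet> (C *\<^sub>v w) = w \<bullet> (C *\<^sub>v v)"
proof -
  have "v \<bullet> (C *\<^sub>v w) = (transpose_mat C *\<^sub>v v) \<bullet> w"
    using transpose_vec_mult_scalar[OF C(1) w v] by simp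
  also have "\<dots> = w \<bullet> (C *\<^sub>v v)" using C v w unfolding symmetric_mat_def
    by (metis comm_scalar_prod mult_mat_vec_carrier)
  finally show ?thesis .
qed

lemma quadratic_form_add_smult: assumes C: "C \<in> carrier_mat n n" "symmetric_mat C" and v: "v \<in> carrier_vec n" and u: "u \<in> carrier_vec n"
  shows "(v + t \<cdot>\<^sub>v u) \<bullet> (C *\<^sub>v (v + t \<cdot>\<^sub>v u)) = v \<bullet> (C *\<^sub>v v) + 2 * t * (u \<bullet> (C *\<^sub>v v)) + t*t * (u \<bullet> (C *\<^sub>v u))"
proof -
  have cu: "C *\<^sub>v u \<in> carrier_vec n" and cv: "C *\<^sub>v v \<in> carrier_vec n" using C u v by auto
  have "C *\<^sub>v (v + t \<cdot>\<^sub>v u) = C *\<^sub>v v + t \<cdot>\<^sub>v (C *\<^sub>v u)"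
    using C u v by (simp add: mult_add_distrib_mat_vec[OF C(1)] mult_mat_vec[OF C(1)])
  then have "(v + t \<cdot>\<^sub>v u) \<bullet> (C *\<^sub>v (v + t \<cdot>\<^sub>v u)) = (v + t \<cdot>\<^sub>v u) \<bullet> (C *\<^sub>v v + t \<cdot>\<^sub>v (C *\<^sub>v u))" by simp
  also have "\<dots> = v \<bullet> (C *\<^sub>v v) + t * (v \<bullet> (C *\<^sub>v u)) + t * (u \<bullet> (C *\<^sub>v v)) + t * t * (u \<bullet> (C *\<^sub>v u))"
    using cu cv u v by (simp add: add_scalar_prod_distrib[of _ n] scalar_prod_add_distrib[of _ n] algebra_simps)
  also have "v \<bullet> (C *\<^sub>v u) = u \<bullet> (C *\<^sub>v v)" by (rule symmetric_mat_scalar_prod_swap[OF C v u])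
  finally show ?thesis by simp
qed

lemma scalar_prod_self_add_smult: assumes v: "(v::real vec) \<in> carrier_vec n" and u: "u \<in> carrier_vec n"
  shows "(v + t \<cdot>\<^sub>v u) \<bullet> (v + t \<cdot>\<^sub>v u) = v \<bullet> v + 2 * t * (u \<bullet> v) + t*t * (u \<bullet> u)"
  using u v by (simp add: add_scalar_prod_distrib[of _ n] scalar_prod_add_distrib[of _ n] comm_scalar_prod[of v n u] algebra_simps)

text \<open>Polarization: evaluate the bound at \<open>v \<plusminus> C v/\<delta>\<close>.\<close>

lemma mat_vec_norm_le_quadratic_form_bound: assumes C: "C \<in> carrier_mat n n" "symmetric_mat C" and d: "\<delta> > 0"
  and bnd: "\<And>w. w \<in> carrier_vec n \<Longrightarrow> \<bar>w \<bullet> (C *\<^sub>v w)\<bar> \<le> \<delta> * (w \<bullet> w)"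
  and v: "v \<in> carrier_vec n"
  shows "(C *\<^sub>v v) \<bullet> (C *\<^sub>v v) \<le> \<delta>^2 * (v \<bullet> v)"
proof -
  define u where "u = C *\<^sub>v v"
  define t where "t = 1 / \<delta>"
  have u: "u \<in> carrier_vec n" using C v unfolding u_def by auto
  have vp: "v + t \<cdot>\<^sub>v u \<in> carrier_vec n" and vm: "v + (-t) \<cdot>\<^sub>v u \<in> carrier_vec n" using u v by auto
  note e1 = quadratic_form_add_smult[OF C v u, of t, folded u_def]
  note e2 = quadratic_form_add_smult[OF C v u, of "-t", folded u_def]
  note s1 = scalar_prod_self_add_smult[OF v u, of t]
  note s2 = scalar_prod_self_add_smult[OF v u, of "-t"]
  have vu: "u \<bullet> v = v \<bullet> u" using u v comm_scalar_prod by blast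
  from bnd[OF vp] have b1: "v \<bullet> u + 2 * t * (u \<bullet> u) + t*t * (u \<bullet> (C *\<^sub>v u)) \<le> \<delta> * (v \<bullet> v + 2 * t * (v \<bullet> u) + t*t * (u \<bullet> u))"
    unfolding e1 s1 vu u_def[symmetric] by (simp add: abs_le_iff)
  from bnd[OF vm] have b2: "- (v \<bullet> u - 2 * t * (u \<bullet> u) + t*t * (u \<bullet> (C *\<^sub>v u))) \<le> \<delta> * (v \<bullet> v - 2 * t * (v \<bullet> u) + t*t * (u \<bullet> u))"
    unfolding e2 s2 vu u_def[symmetric] by (simp add: abs_le_iff)
  from b1 b2 have
    "4 * t * (u \<bullet> u) \<le> \<delta> * (2 * (v \<bullet> v) + 2 * t * t * (u \<bullet> u))"
    by (simp add: algebra_simps)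
  then have "4 * (u \<bullet> u) / \<delta> \<le> 2 * \<delta> * (v \<bullet> v) + 2 * (u \<bullet> u) / \<delta>"
    using d unfolding t_def by (simp add: field_simps)
  then have "(u \<bullet> u) / \<delta> \<le> \<delta> * (v \<bullet> v)" by simp
  then show ?thesis using d unfolding u_def by (simp add: field_simps power2_eq_square)
qed

lemma transpose_smult_one_mat: "transpose_mat (c \<cdot>\<^sub>m 1\<^sub>m n) = (c \<cdot>\<^sub>m 1\<^sub>m n :: real mat)"
  by (intro eq_matI) auto

lemma smult_one_mat_mult_vec: assumes w: "(w::real vec) \<in> carrier_vec n" shows "(c \<cdot>\<^sub>m 1\<^sub>m n) *\<^sub>v w = c \<cdot>\<^sub>v w"
proof (rule eq_vecI)
  fix i assume i: "i < dim_vec (c \<cdot>\<^sub>v w)"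
  then have i': "i < n" using w by simp
  have "row (c \<cdot>\<^sub>m 1\<^sub>m n) i = c \<cdot>\<^sub>v unit_vec n i" using i' by (auto simp: row_smult)
  moreover have "(c \<cdot>\<^sub>v unit_vec n i) \<bullet> w = c * w $ i" using w i' by simp
  ultimately show "((c \<cdot>\<^sub>m 1\<^sub>m n) *\<^sub>v w) $ i = (c \<cdot>\<^sub>v w) $ i" using i' w by simp
qed (use w in simp)

lemma obtain_inverse_mat: assumes A: "(A::real mat) \<in> carrier_mat n n" and d: "det A \<noteq> 0"
  obtains D where "D \<in> carrier_mat n n" "D * A = 1\<^sub>m n" "A * D = 1\<^sub>m n"
proof -
  from det_non_zero_imp_unit[OF A d, of "()"]
  show ?thesis using that unfolding Units_def ring_mat_def by auto
qed

lemma quadratic_form_abs_le_entry_sum: assumes A: "(A::real mat) \<in> carrier_mat n n" and v: "v \<in> carrier_vec n"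
  shows "\<bar>v \<bullet> (A *\<^sub>v v)\<bar> \<le> (\<Sum>i<n. \<Sum>j<n. \<bar>A $$ (i,j)\<bar>) * (v \<bullet> v)"
proof -
  have vv: "\<And>i j. i < n \<Longrightarrow> j < n \<Longrightarrow> \<bar>v $ i * v $ j\<bar> \<le> v \<bullet> v"
  proof -
    fix i j assume ij: "i < n" "j < n"
    have "(v$i)^2 \<le> v \<bullet> v" "(v$j)^2 \<le> v \<bullet> v" using vec_index_sq_le ij v by auto
    moreover have "2 * \<bar>v $ i * v $ j\<bar> \<le> (v$i)^2 + (v$j)^2"
      using sum_squares_bound[of "\<bar>v$i\<bar>" "\<bar>v$j\<bar>"] by (simp add: abs_mult power2_eq_square)
    ultimately show "\<bar>v $ i * v $ j\<bar> \<le> v \<bullet> v" by linarith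
  qed
  have "v \<bullet> (A *\<^sub>v v) = (\<Sum>i<n. \<Sum>j<n. A $$ (i,j) * (v $ i * v $ j))"
    using A v by (auto simp: scalar_prod_def sum_distrib_left lessThan_atLeast0 intro!: sum.cong simp: algebra_simps)
  also have "\<bar>\<dots>\<bar> \<le> (\<Sum>i<n. \<Sum>j<n. \<bar>A $$ (i,j)\<bar> * (v \<bullet> v))"
    apply (rule order_trans[OF sum_abs], rule sum_mono)
    apply (rule order_trans[OF sum_abs], rule sum_mono)
    using vv by (simp add: abs_mult mult_left_mono)
  finally show ?thesis by (simp add: sum_distrib_right)
qed

lemma mat_vec_norm_le_row_norms: assumes D: "(D::real mat) \<in> carrier_mat n n" and u: "u \<in> carrier_vec n"
  shows "(D *\<^sub>v u) \<bullet> (D *\<^sub>v u) \<le> (\<Sum>i<n. row D i \<bullet> row D i) * (u \<bullet> u)"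
proof -
  have "(D *\<^sub>v u) \<bullet> (D *\<^sub>v u) = (\<Sum>i<n. (row D i \<bullet> u)^2)"
    using D u unfolding scalar_prod_def[of "D *\<^sub>v u"] by (auto simp: power2_eq_square lessThan_atLeast0)
  also have "\<dots> \<le> (\<Sum>i<n. (row D i \<bullet> row D i) * (u \<bullet> u))"
    by (rule sum_mono, rule cauchy_schwarz_scalar_prod[of _ n], insert D u, auto)
  finally show ?thesis by (simp add: sum_distrib_right)
qed

text \<open>Apply the previous lemma to \<open>C - (\<beta>/2) I\<close>, whose quadratic form is bounded by \<open>\<beta>/2\<close>.\<close>

lemma psd_mat_vec_norm_le: assumes C: "C \<in> carrier_mat n n" "symmetric_mat C" and b: "\<beta> > 0"
  and bnd: "\<And>w. w \<in> carrier_vec n \<Longrightarrow> 0 \<le> w \<bullet> (C *\<^sub>v w) \<and> w \<bullet> (C *\<^sub>v w) \<le> \<beta> * (w \<bullet> w)"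
  and v: "v \<in> carrier_vec n"
  shows "(C *\<^sub>v v) \<bullet> (C *\<^sub>v v) \<le> \<beta> * (v \<bullet> (C *\<^sub>v v))"
proof -
  define C' where "C' = C - (\<beta>/2) \<cdot>\<^sub>m 1\<^sub>m n"
  have C'c: "C' \<in> carrier_mat n n" using C unfolding C'_def by auto
  have C'v: "\<And>w. w \<in> carrier_vec n \<Longrightarrow> C' *\<^sub>v w = C *\<^sub>v w + (-\<beta>/2) \<cdot>\<^sub>v w"
    unfolding C'_def using C by (subst minus_mult_distrib_mat_vec[of _ n n]) (auto simp: smult_one_mat_mult_vec)
  have sC': "symmetric_mat C'" using C unfolding C'_def symmetric_mat_def
    by (simp add: transpose_minus[of _ n n] transpose_smult_one_mat)
  have wC': "\<And>w. w \<in> carrier_vec n \<Longrightarrow> w \<bullet> (C' *\<^sub>v w) = w \<bullet> (C *\<^sub>v w) - \<beta>/2 * (w \<bullet> w)"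
    using C by (simp add: C'v scalar_prod_add_distrib[of _ n])
  have "(C' *\<^sub>v v) \<bullet> (C' *\<^sub>v v) \<le> (\<beta>/2)^2 * (v \<bullet> v)"
  proof (rule mat_vec_norm_le_quadratic_form_bound[OF C'c sC' _ _ v])
    fix w :: "real vec" assume w: "w \<in> carrier_vec n"
    from bnd[OF w] show "\<bar>w \<bullet> (C' *\<^sub>v w)\<bar> \<le> \<beta> / 2 * (w \<bullet> w)" unfolding wC'[OF w] by (auto simp: abs_le_iff field_simps)
  qed (use b in auto)
  moreover have "(C' *\<^sub>v v) \<bullet> (C' *\<^sub>v v) = (C *\<^sub>v v) \<bullet> (C *\<^sub>v v) + 2 * (-\<beta>/2) * (v \<bullet> (C *\<^sub>v v)) + (-\<beta>/2) * (-\<beta>/2) * (v \<bullet> v)"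
    unfolding C'v[OF v] by (rule scalar_prod_self_add_smult[of _ n], insert C v, auto)
  ultimately show ?thesis by (simp add: power2_eq_square algebra_simps)
qed

section \<open>Rayleigh quotients and extreme eigenvalues\<close>

lemma nonsingular_psd_quadratic_form_coercive:
  assumes C: "C \<in> carrier_mat n n" "symmetric_mat C" "det C \<noteq> 0" and \<beta>: "\<beta> > 0"
    and bnd: "\<And>w. w \<in> carrier_vec n \<Longrightarrow> 0 \<le> w \<bullet> (C *\<^sub>v w) \<and> w \<bullet> (C *\<^sub>v w) \<le> \<beta> * (w \<bullet> w)"
  obtains \<epsilon> where "\<epsilon> > 0" "\<And>v. v \<in> carrier_vec n \<Longrightarrow> \<epsilon> * (v \<bullet> v) \<le> v \<bullet> (C *\<^sub>v v)"
proof -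
  obtain D where D: "D \<in> carrier_mat n n" "D * C = 1\<^sub>m n" using obtain_inverse_mat[OF C(1) C(3)] by metis
  define \<gamma> where "\<gamma> = (\<Sum>i<n. row D i \<bullet> row D i) + 1"
  have \<gamma>: "\<gamma> > 0" "(\<Sum>i<n. row D i \<bullet> row D i) \<le> \<gamma>"
    unfolding \<gamma>_def using sum_nonneg[of "{..<n}" "\<lambda>i. row D i \<bullet> row D i"] scalar_prod_self_nonneg by auto
  have key: "v \<bullet> v \<le> \<gamma> * \<beta> * (v \<bullet> (C *\<^sub>v v))" if v: "v \<in> carrier_vec n" for v
  proof -
    have "v = D *\<^sub>v (C *\<^sub>v v)" using D C v by (simp add: assoc_mult_mat_vec[symmetric, of _ n n _ n])
    then have "v \<bullet> v \<le> (\<Sum>i<n. row D i \<bullet> row D i) * ((C *\<^sub>v v) \<bullet> (C *\<^sub>v v))"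
      using mat_vec_norm_le_row_norms[OF D(1), of "C *\<^sub>v v"] C v by auto
    also have "\<dots> \<le> \<gamma> * ((C *\<^sub>v v) \<bullet> (C *\<^sub>v v))"
      by (rule mult_right_mono[OF \<gamma>(2) scalar_prod_self_nonneg])
    also have "\<dots> \<le> \<gamma> * (\<beta> * (v \<bullet> (C *\<^sub>v v)))"
      using psd_mat_vec_norm_le[OF C(1,2) \<beta> bnd v] \<gamma>(1) by simp
    finally show ?thesis by (simp add: mult.assoc)
  qed
  show ?thesis
  proof (rule that)
    show "1 / (\<gamma> * \<beta>) > 0" using \<gamma>(1) \<beta> by simp
    fix v :: "real vec" assume "v \<in> carrier_vec n"
    from key[OF this] show "1 / (\<gamma> * \<beta>) * (v \<bullet> v) \<le> v \<bullet> (C *\<^sub>v v)"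
      using \<gamma>(1) \<beta> by (simp add: field_simps)
  qed
qed

lemma rayleigh_quotient_sup:
  assumes A: "(A::real mat) \<in> carrier_mat n n" and n: "n > 0"
  obtains \<mu> where "\<And>v. v \<in> carrier_vec n \<Longrightarrow> v \<bullet> (A *\<^sub>v v) \<le> \<mu> * (v \<bullet> v)"
    and "\<And>\<epsilon>. \<epsilon> > 0 \<Longrightarrow> \<exists>v\<in>carrier_vec n. (\<mu> - \<epsilon>) * (v \<bullet> v) < v \<bullet> (A *\<^sub>v v)"
proof -
  define S where "S = {v \<bullet> (A *\<^sub>v v) / (v \<bullet> v) | v. v \<in> carrier_vec n \<and> v \<noteq> 0\<^sub>v n}"
  have e0: "unit_vec n 0 \<noteq> (0\<^sub>v n :: real vec)"
  proof
    assume "unit_vec n 0 = (0\<^sub>v n :: real vec)"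
    then have "unit_vec n 0 $ 0 = (0\<^sub>v n :: real vec) $ 0" by simp
    then show False using n by simp
  qed
  have "unit_vec n 0 \<bullet> (A *\<^sub>v unit_vec n 0) / (unit_vec n 0 \<bullet> unit_vec n 0) \<in> S"
    unfolding S_def by (intro CollectI exI[of _ "unit_vec n 0"]) (simp add: e0)
  then have Sne: "S \<noteq> {}" by blast
  define R0 where "R0 = (\<Sum>i<n. \<Sum>j<n. \<bar>A $$ (i,j)\<bar>)"
  have Sbdd: "bdd_above S" unfolding S_def bdd_above_def
  proof (intro exI[of _ R0] ballI)
    fix x assume "x \<in> {v \<bullet> (A *\<^sub>v v) / (v \<bullet> v) |v. v \<in> carrier_vec n \<and> v \<noteq> 0\<^sub>v n}"
    then obtain v where v: "v \<in> carrier_vec n" "v \<noteq> 0\<^sub>v n" and x: "x = v \<bullet> (A *\<^sub>v v) / (v \<bullet> v)" by blast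
    have "v \<bullet> (A *\<^sub>v v) \<le> R0 * (v \<bullet> v)"
      using quadratic_form_abs_le_entry_sum[OF A v(1)] unfolding R0_def by (simp add: abs_le_iff)
    then show "x \<le> R0" unfolding x using scalar_prod_self_pos[OF v] by (simp add: divide_le_eq)
  qed
  show ?thesis
  proof (rule that[of "Sup S"])
    fix v :: "real vec" assume v: "v \<in> carrier_vec n"
    show "v \<bullet> (A *\<^sub>v v) \<le> Sup S * (v \<bullet> v)"
    proof (cases "v = 0\<^sub>v n")
      case True
      then show ?thesis using A by simp
    next
      case False
      then have "v \<bullet> (A *\<^sub>v v) / (v \<bullet> v) \<le> Sup S" using v Sbdd by (intro cSup_upper) (auto simp: S_def)
      then show ?thesis using scalar_prod_self_pos[OF v False] by (simp add: divide_le_eq)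
    qed
  next
    fix \<epsilon> :: real assume "\<epsilon> > 0"
    then obtain x where "x \<in> S" "Sup S - \<epsilon> < x" using less_cSup_iff[OF Sne Sbdd, of "Sup S - \<epsilon>"] by auto
    then obtain v where v: "v \<in> carrier_vec n" "v \<noteq> 0\<^sub>v n" "Sup S - \<epsilon> < v \<bullet> (A *\<^sub>v v) / (v \<bullet> v)"
      unfolding S_def by blast
    then have "(Sup S - \<epsilon>) * (v \<bullet> v) < v \<bullet> (A *\<^sub>v v)"
      using scalar_prod_self_pos[OF v(1,2)] by (simp add: less_divide_eq)
    with v(1) show "\<exists>v\<in>carrier_vec n. (Sup S - \<epsilon>) * (v \<bullet> v) < v \<bullet> (A *\<^sub>v v)" by blast
  qed
qed

text \<open>\<open>\<mu> I - A\<close> is positive semidefinite for the supremum \<open>\<mu>\<close> of the Rayleigh quotient; were it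
  nonsingular it would be coercive, and \<open>\<mu>\<close> would not be the supremum.\<close>

lemma rayleigh_quotient_max_eigenvalue:
  assumes A: "(A::real mat) \<in> carrier_mat n n" "symmetric_mat A" and n: "n > 0"
  shows "\<exists>\<mu>. eigenvalue A \<mu> \<and> (\<forall>v\<in>carrier_vec n. v \<bullet> (A *\<^sub>v v) \<le> \<mu> * (v \<bullet> v))"
proof -
  obtain \<mu> where upper: "\<And>v. v \<in> carrier_vec n \<Longrightarrow> v \<bullet> (A *\<^sub>v v) \<le> \<mu> * (v \<bullet> v)"
    and approx: "\<And>\<epsilon>. \<epsilon> > 0 \<Longrightarrow> \<exists>v\<in>carrier_vec n. (\<mu> - \<epsilon>) * (v \<bullet> v) < v \<bullet> (A *\<^sub>v v)"
    using rayleigh_quotient_sup[OF A(1) n] by blast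
  define C where "C = \<mu> \<cdot>\<^sub>m 1\<^sub>m n - A"
  have Cc: "C \<in> carrier_mat n n" using A unfolding C_def by auto
  have sC: "symmetric_mat C"
    using A unfolding C_def symmetric_mat_def by (simp add: transpose_minus[of _ n n] transpose_smult_one_mat)
  have wC: "w \<bullet> (C *\<^sub>v w) = \<mu> * (w \<bullet> w) - w \<bullet> (A *\<^sub>v w)" if w: "w \<in> carrier_vec n" for w
    unfolding C_def using A w
    by (simp add: minus_mult_distrib_mat_vec[of _ n n] smult_one_mat_mult_vec scalar_prod_minus_distrib[of _ n])
  define R0 where "R0 = (\<Sum>i<n. \<Sum>j<n. \<bar>A $$ (i,j)\<bar>)"
  define \<beta> where "\<beta> = \<bar>\<mu>\<bar> + R0 + 1"
  have R0: "R0 \<ge> 0" unfolding R0_def by (intro sum_nonneg) auto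
  then have \<beta>: "\<beta> > 0" unfolding \<beta>_def by simp
  have Cbnd: "0 \<le> w \<bullet> (C *\<^sub>v w) \<and> w \<bullet> (C *\<^sub>v w) \<le> \<beta> * (w \<bullet> w)" if w: "w \<in> carrier_vec n" for w
  proof -
    have q: "\<bar>w \<bullet> (A *\<^sub>v w)\<bar> \<le> R0 * (w \<bullet> w)"
      using quadratic_form_abs_le_entry_sum[OF A(1) w] unfolding R0_def .
    have ww: "w \<bullet> w \<ge> 0" by (rule scalar_prod_self_nonneg)
    have "\<mu> * (w \<bullet> w) \<le> \<bar>\<mu>\<bar> * (w \<bullet> w)" using ww by (simp add: mult_right_mono)
    then show ?thesis unfolding wC[OF w] \<beta>_def using upper[OF w] q ww by (auto simp: algebra_simps abs_le_iff)
  qed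
  have "det C = 0"
  proof (rule ccontr)
    assume "det C \<noteq> 0"
    then obtain \<epsilon> where \<epsilon>: "\<epsilon> > 0" "\<And>v. v \<in> carrier_vec n \<Longrightarrow> \<epsilon> * (v \<bullet> v) \<le> v \<bullet> (C *\<^sub>v v)"
      using nonsingular_psd_quadratic_form_coercive[OF Cc sC _ \<beta> Cbnd] by blast
    obtain v where v: "v \<in> carrier_vec n" "(\<mu> - \<epsilon>) * (v \<bullet> v) < v \<bullet> (A *\<^sub>v v)" using approx[OF \<epsilon>(1)] by blast
    have "(\<mu> - \<epsilon>) * (v \<bullet> v) = \<mu> * (v \<bullet> v) - \<epsilon> * (v \<bullet> v)" by (simp add: algebra_simps)
    then show False using \<epsilon>(2)[OF v(1)] wC[OF v(1)] v(2) by linarith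
  qed
  moreover have "char_matrix A \<mu> = - C" unfolding char_matrix_def C_def using A by (intro eq_matI) auto
  ultimately have "eigenvalue A \<mu>" using eigenvalue_det[OF A(1)] det_0_negate[OF Cc] by simp
  then show ?thesis using upper by blast
qed

lemma finite_eigenvalues: assumes A: "(A::real mat) \<in> carrier_mat n n" shows "finite {x. eigenvalue A x}"
proof -
  have "char_poly A \<noteq> 0" using degree_monic_char_poly[OF A] by (metis coeff_0 zero_neq_one)
  then have "finite {x. poly (char_poly A) x = 0}" by (rule poly_roots_finite)
  then show ?thesis using eigenvalue_root_char_poly[OF A] by simp
qed

lemma eigenvalue_uminus_mat:
  assumes A: "(A::real mat) \<in> carrier_mat n n" and e: "eigenvalue (- A) \<nu>"
  shows "eigenvalue A (- \<nu>)"
proof -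
  obtain v where v: "v \<in> carrier_vec n" "v \<noteq> 0\<^sub>v n" "(- A) *\<^sub>v v = \<nu> \<cdot>\<^sub>v v"
    using e A unfolding eigenvalue_def eigenvector_def by auto
  have "A *\<^sub>v v = (- \<nu>) \<cdot>\<^sub>v v"
  proof (rule eq_vecI)
    fix i assume i: "i < dim_vec ((- \<nu>) \<cdot>\<^sub>v v)"
    have i': "i < n" using i v by simp
    have "((- A) *\<^sub>v v) $ i = (\<nu> \<cdot>\<^sub>v v) $ i" using arg_cong[OF v(3), of "\<lambda>x. x $ i"] .
    moreover have "((- A) *\<^sub>v v) $ i = - ((A *\<^sub>v v) $ i)" using A v(1) i' by simp
    ultimately show "(A *\<^sub>v v) $ i = ((- \<nu>) \<cdot>\<^sub>v v) $ i" using i' v by simp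
  qed (use v A in simp)
  then show ?thesis unfolding eigenvalue_def eigenvector_def using v A by auto
qed

lemma rayleigh_quotient_bounds:
  assumes A: "(A::real mat) \<in> carrier_mat n n" "symmetric_mat A" and n: "n > 0"
  shows "{x. eigenvalue A x} \<noteq> {}"
    and "\<And>v. v \<in> carrier_vec n \<Longrightarrow> v \<bullet> (A *\<^sub>v v) \<le> lambda_max A * (v \<bullet> v)"
    and "\<And>v. v \<in> carrier_vec n \<Longrightarrow> lambda_min A * (v \<bullet> v) \<le> v \<bullet> (A *\<^sub>v v)"
proof -
  obtain \<mu> where \<mu>: "eigenvalue A \<mu>" "\<And>v. v\<in>carrier_vec n \<Longrightarrow> v \<bullet> (A *\<^sub>v v) \<le> \<mu> * (v \<bullet> v)"
    using rayleigh_quotient_max_eigenvalue[OF A n] by blast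
  show "{x. eigenvalue A x} \<noteq> {}" using \<mu> by blast
  have fin: "finite {x. eigenvalue A x}" by (rule finite_eigenvalues[OF A(1)])
  have max: "\<mu> \<le> lambda_max A" unfolding lambda_max_def using fin \<mu> by (intro Max_ge) auto
  show "v \<bullet> (A *\<^sub>v v) \<le> lambda_max A * (v \<bullet> v)" if v: "v \<in> carrier_vec n" for v
  proof -
    have "\<mu> * (v \<bullet> v) \<le> lambda_max A * (v \<bullet> v)" by (rule mult_right_mono[OF max scalar_prod_self_nonneg])
    then show ?thesis using \<mu>(2)[OF v] by linarith
  qed
  have mA: "- A \<in> carrier_mat n n" "symmetric_mat (- A)"
    using A unfolding symmetric_mat_def by (auto simp: transpose_uminus)
  obtain \<nu> where \<nu>: "eigenvalue (- A) \<nu>" "\<And>v. v\<in>carrier_vec n \<Longrightarrow> v \<bullet> ((- A) *\<^sub>v v) \<le> \<nu> * (v \<bullet> v)"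
    using rayleigh_quotient_max_eigenvalue[OF mA n] by blast
  have min: "lambda_min A \<le> - \<nu>"
    unfolding lambda_min_def using fin eigenvalue_uminus_mat[OF A(1) \<nu>(1)] by (intro Min_le) auto
  show "lambda_min A * (v \<bullet> v) \<le> v \<bullet> (A *\<^sub>v v)" if v: "v \<in> carrier_vec n" for v
  proof -
    have "v \<bullet> ((- A) *\<^sub>v v) = - (v \<bullet> (A *\<^sub>v v))" using A v by simp
    moreover have "lambda_min A * (v \<bullet> v) \<le> (- \<nu>) * (v \<bullet> v)"
      by (rule mult_right_mono[OF min scalar_prod_self_nonneg])
    ultimately show ?thesis using \<nu>(2)[OF v] by linarith
  qed
qed

lemma negative_definite_eigenvalue_neg:
  assumes A: "(A::real mat) \<in> carrier_mat n n" and nd: "negative_definite A" and e: "eigenvalue A k"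
  shows "k < 0"
proof -
  obtain v where v: "v \<in> carrier_vec n" "v \<noteq> 0\<^sub>v n" "A *\<^sub>v v = k \<cdot>\<^sub>v v"
    using e A unfolding eigenvalue_def eigenvector_def by auto
  have "v \<bullet> (A *\<^sub>v v) < 0" using nd v A unfolding negative_definite_def by auto
  then have "k * (v \<bullet> v) < 0" using v by simp
  then show ?thesis using scalar_prod_self_pos[OF v(1,2)] by (simp add: mult_less_0_iff)
qed

lemma negative_definite_lambda_bounds:
  assumes A: "(A::real mat) \<in> carrier_mat n n" "symmetric_mat A" "negative_definite A" and n: "n > 0"
  shows "lambda_min A \<le> lambda_max A" "lambda_max A < 0"
proof -
  have ne: "{x. eigenvalue A x} \<noteq> {}" by (rule rayleigh_quotient_bounds(1)[OF A(1,2) n])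
  have fin: "finite {x. eigenvalue A x}" by (rule finite_eigenvalues[OF A(1)])
  have "lambda_max A \<in> {x. eigenvalue A x}" unfolding lambda_max_def using fin ne by (rule Max_in)
  then show "lambda_max A < 0" using negative_definite_eigenvalue_neg[OF A(1,3)] by simp
  have "lambda_min A \<in> {x. eigenvalue A x}" unfolding lambda_min_def using fin ne by (rule Min_in)
  then show "lambda_min A \<le> lambda_max A" unfolding lambda_max_def using fin by (intro Max_ge) auto
qed

section \<open>Polynomials in a matrix applied to a vector\<close>

lemma zero_smult_real_vec[simp]: "(0::real) \<cdot>\<^sub>v (v::real vec) = 0\<^sub>v (dim_vec v)"
  by (intro eq_vecI) auto

lemma mult_mat_zero_vec[simp]: "(M::real mat) \<in> carrier_mat nr nc \<Longrightarrow> M *\<^sub>v 0\<^sub>v nc = 0\<^sub>v nr"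
  by (intro eq_vecI) auto

definition poly_mat_vec :: "real poly \<Rightarrow> real mat \<Rightarrow> real vec \<Rightarrow> real vec" where
  "poly_mat_vec p M v = foldr (\<lambda>a w. a \<cdot>\<^sub>v v + M *\<^sub>v w) (coeffs p) (0\<^sub>v (dim_vec v))"

context fixes M :: "real mat" and n :: nat assumes M: "M \<in> carrier_mat n n"
begin

lemma poly_mat_vec_0[simp]: "poly_mat_vec 0 M v = 0\<^sub>v (dim_vec v)" unfolding poly_mat_vec_def by simp

lemma poly_mat_vec_pCons: assumes v: "v \<in> carrier_vec n"
  shows "poly_mat_vec (pCons a p) M v = a \<cdot>\<^sub>v v + M *\<^sub>v poly_mat_vec p M v"
proof (cases "p = 0 \<and> a = 0")
  case True
  then show ?thesis using M v by (simp add: poly_mat_vec_def)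
next
  case False
  then have "coeffs (pCons a p) = a # coeffs p" by (auto simp: cCons_def)
  then show ?thesis using M unfolding poly_mat_vec_def by simp
qed

lemma poly_mat_vec_carrier[simp]: "v \<in> carrier_vec n \<Longrightarrow> poly_mat_vec p M v \<in> carrier_vec n"
  by (induct p) (use M in \<open>auto simp: poly_mat_vec_pCons\<close>)

lemma poly_mat_vec_dim[simp]: "v \<in> carrier_vec n \<Longrightarrow> dim_vec (poly_mat_vec p M v) = n"
  using poly_mat_vec_carrier by auto

lemma poly_mat_vec_add: assumes v: "v \<in> carrier_vec n" shows "poly_mat_vec (p + q) M v = poly_mat_vec p M v + poly_mat_vec q M v"
proof (induct p arbitrary: q)
  case 0 then show ?case using v by simp
next
  case (pCons a p)
  show ?case
  proof (cases q rule: pCons_cases)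
    case (pCons b q')
    have ep: "poly_mat_vec p M v \<in> carrier_vec n" "poly_mat_vec q' M v \<in> carrier_vec n" using v by auto
    have "poly_mat_vec (pCons a p + q) M v = (a + b) \<cdot>\<^sub>v v + M *\<^sub>v (poly_mat_vec p M v + poly_mat_vec q' M v)"
      unfolding pCons add_pCons poly_mat_vec_pCons[OF v] pCons.hyps ..
    also have "\<dots> = (a \<cdot>\<^sub>v v + M *\<^sub>v poly_mat_vec p M v) + (b \<cdot>\<^sub>v v + M *\<^sub>v poly_mat_vec q' M v)"
      using M v ep by (intro eq_vecI) (auto simp: scalar_prod_add_distrib[of _ n] algebra_simps)
    finally show ?thesis unfolding pCons poly_mat_vec_pCons[OF v] .
  qed
qed

lemma poly_mat_vec_smult: assumes v: "v \<in> carrier_vec n" shows "poly_mat_vec (Polynomial.smult c p) M v = c \<cdot>\<^sub>v poly_mat_vec p M v"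
proof (induct p)
  case 0 then show ?case using v by (intro eq_vecI) auto
next
  case (pCons a p)
  have ep: "poly_mat_vec p M v \<in> carrier_vec n" using v by auto
  show ?case using M v ep pCons.hyps
    by (simp add: poly_mat_vec_pCons) (intro eq_vecI, auto simp: algebra_simps)
qed

lemma poly_mat_vec_smult_right: assumes u: "u \<in> carrier_vec n"
  shows "poly_mat_vec p M (c \<cdot>\<^sub>v u) = c \<cdot>\<^sub>v poly_mat_vec p M u"
proof (induct p)
  case 0 then show ?case using u by (intro eq_vecI) auto
next
  case (pCons a p)
  have ep: "poly_mat_vec p M u \<in> carrier_vec n" using u by auto
  show ?case using M u ep pCons.hyps
    by (simp add: poly_mat_vec_pCons) (intro eq_vecI, auto simp: algebra_simps)
qed

lemma poly_mat_vec_pCons0: assumes v: "v \<in> carrier_vec n" shows "poly_mat_vec (pCons 0 p) M v = M *\<^sub>v poly_mat_vec p M v"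
  using M v by (simp add: poly_mat_vec_pCons) 

lemma poly_mat_vec_mult: assumes v: "v \<in> carrier_vec n" shows "poly_mat_vec (p * q) M v = poly_mat_vec p M (poly_mat_vec q M v)"
proof (induct p)
  case 0 then show ?case using v by simp
next
  case (pCons a p)
  have eq: "poly_mat_vec q M v \<in> carrier_vec n" using v by simp
  have "poly_mat_vec (pCons a p * q) M v = a \<cdot>\<^sub>v poly_mat_vec q M v + M *\<^sub>v (poly_mat_vec p M (poly_mat_vec q M v))"
    using v by (simp add: poly_mat_vec_add poly_mat_vec_smult poly_mat_vec_pCons0 pCons.hyps)
  also have "\<dots> = poly_mat_vec (pCons a p) M (poly_mat_vec q M v)"
    using eq by (simp add: poly_mat_vec_pCons)
  finally show ?case .
qed

lemma poly_mat_vec_const: "v \<in> carrier_vec n \<Longrightarrow> poly_mat_vec [:c:] M v = c \<cdot>\<^sub>v v"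
  using M by (simp add: poly_mat_vec_pCons)

lemma poly_mat_vec_one: "v \<in> carrier_vec n \<Longrightarrow> poly_mat_vec 1 M v = v"
  using poly_mat_vec_const[of v 1] by (simp add: one_pCons)

lemma poly_mat_vec_x: "v \<in> carrier_vec n \<Longrightarrow> poly_mat_vec [:0,1:] M v = M *\<^sub>v v"
  using M by (simp add: poly_mat_vec_pCons poly_mat_vec_const)

lemma poly_mat_vec_diff: assumes v: "v \<in> carrier_vec n" shows "poly_mat_vec (p - q) M v = poly_mat_vec p M v - poly_mat_vec q M v"
proof -
  have "poly_mat_vec p M v = poly_mat_vec ((p - q) + q) M v" by simp
  also have "\<dots> = poly_mat_vec (p - q) M v + poly_mat_vec q M v" by (rule poly_mat_vec_add[OF v])
  finally have e: "poly_mat_vec p M v = poly_mat_vec (p - q) M v + poly_mat_vec q M v" .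
  show ?thesis
  proof (rule eq_vecI)
    fix i assume "i < dim_vec (poly_mat_vec p M v - poly_mat_vec q M v)"
    then have i: "i < n" using v by simp
    have "poly_mat_vec p M v $ i = poly_mat_vec (p - q) M v $ i + poly_mat_vec q M v $ i" using arg_cong[OF e, of "\<lambda>x. x $ i"] i v by simp
    then show "poly_mat_vec (p - q) M v $ i = (poly_mat_vec p M v - poly_mat_vec q M v) $ i" using i v by simp
  qed (use v in simp)
qed

lemma poly_mat_vec_mult_mat_vec_comm: assumes v: "v \<in> carrier_vec n" shows "poly_mat_vec p M (M *\<^sub>v v) = M *\<^sub>v poly_mat_vec p M v"
proof -
  have "poly_mat_vec p M (M *\<^sub>v v) = poly_mat_vec (p * [:0,1:]) M v" unfolding poly_mat_vec_mult[OF v] poly_mat_vec_x[OF v] ..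
  also have "\<dots> = poly_mat_vec ([:0,1:] * p) M v" by (simp add: mult.commute)
  also have "\<dots> = M *\<^sub>v poly_mat_vec p M v" using v M by (simp only: poly_mat_vec_mult poly_mat_vec_x poly_mat_vec_carrier)
  finally show ?thesis .
qed

lemma poly_mat_vec_symmetric: assumes s: "symmetric_mat M" shows "\<And>u w. u \<in> carrier_vec n \<Longrightarrow> w \<in> carrier_vec n \<Longrightarrow>
   u \<bullet> poly_mat_vec p M w = w \<bullet> poly_mat_vec p M u"
proof (induct p)
  case 0 then show ?case by simp
next
  case (pCons a p u w)
  have c: "poly_mat_vec p M u \<in> carrier_vec n" "poly_mat_vec p M w \<in> carrier_vec n" "M *\<^sub>v u \<in> carrier_vec n" "M *\<^sub>v w \<in> carrier_vec n"
    using pCons.prems M by auto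
  have "u \<bullet> (M *\<^sub>v poly_mat_vec p M w) = poly_mat_vec p M w \<bullet> (M *\<^sub>v u)" by (rule symmetric_mat_scalar_prod_swap[OF M s pCons.prems(1) c(2)])
  also have "\<dots> = (M *\<^sub>v u) \<bullet> poly_mat_vec p M w" using c comm_scalar_prod by blast
  also have "\<dots> = w \<bullet> poly_mat_vec p M (M *\<^sub>v u)" by (rule pCons.hyps(2)[OF c(3) pCons.prems(2)])
  also have "\<dots> = w \<bullet> (M *\<^sub>v poly_mat_vec p M u)" using poly_mat_vec_mult_mat_vec_comm[OF pCons.prems(1)] by simp
  finally have e: "u \<bullet> (M *\<^sub>v poly_mat_vec p M w) = w \<bullet> (M *\<^sub>v poly_mat_vec p M u)" .
  have uw: "u \<bullet> w = w \<bullet> u" using pCons.prems comm_scalar_prod by blast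
  show ?case using pCons.prems c M
    by (simp add: poly_mat_vec_pCons scalar_prod_add_distrib[of _ n] e uw)
qed

end

definition vanishes_beyond :: "nat \<Rightarrow> nat \<Rightarrow> real vec \<Rightarrow> bool" where
  "vanishes_beyond d t v \<longleftrightarrow> (\<forall>s < dim_vec v. (s + d < t \<or> t + d < s) \<longrightarrow> v $ s = 0)"

definition bandwidth_le :: "nat \<Rightarrow> real mat \<Rightarrow> bool" where
  "bandwidth_le d B \<longleftrightarrow> (\<forall>i j. i < dim_row B \<longrightarrow> j < dim_col B \<longrightarrow> (i + d < j \<or> j + d < i) \<longrightarrow> B $$ (i,j) = 0)"

lemma vanishes_beyond_mult_mat_vec: assumes B: "B \<in> carrier_mat n n" and v: "v \<in> carrier_vec n"
  and b: "bandwidth_le h B" and nv: "vanishes_beyond d t v" shows "vanishes_beyond (h + d) t (B *\<^sub>v v)"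
  unfolding vanishes_beyond_def
proof (intro allI impI)
  fix i assume i: "i < dim_vec (B *\<^sub>v v)" and ij: "i + (h + d) < t \<or> t + (h + d) < i"
  have "(B *\<^sub>v v) $ i = (\<Sum>l = 0..<n. B $$ (i,l) * v $ l)"
    using i v B by (auto simp: scalar_prod_def)
  also have "\<dots> = 0"
  proof (rule sum.neutral, intro ballI)
    fix l assume l: "l \<in> {0..<n}"
    show "B $$ (i,l) * v $ l = 0"
    proof (cases "i + h < l \<or> l + h < i")
      case True then show ?thesis using b i l B unfolding bandwidth_le_def by auto
    next
      case False
      then have "l + d < t \<or> t + d < l" using ij by linarith
      then show ?thesis using nv l v unfolding vanishes_beyond_def by auto
    qed
  qed
  finally show "(B *\<^sub>v v) $ i = 0" .
qed

lemma vanishes_beyond_mono: "vanishes_beyond d t v \<Longrightarrow> d \<le> d' \<Longrightarrow> vanishes_beyond d' t v"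
  unfolding vanishes_beyond_def by fastforce

lemma poly_mat_vec_vanishes_beyond: assumes M: "M \<in> carrier_mat n n" and b: "bandwidth_le h M" and v: "v \<in> carrier_vec n" and nv: "vanishes_beyond 0 t v"
  shows "vanishes_beyond (degree p * h) t (poly_mat_vec p M v)"
proof (induct p)
  case 0 then show ?case unfolding vanishes_beyond_def poly_mat_vec_def by simp
next
  case (pCons a p)
  have ep: "poly_mat_vec p M v \<in> carrier_vec n" using M v by simp
  show ?case
  proof (cases "p = 0")
    case True then show ?thesis using M v nv by (simp add: poly_mat_vec_pCons vanishes_beyond_def)
  next
    case False
    have n1: "vanishes_beyond (h + degree p * h) t (M *\<^sub>v poly_mat_vec p M v)" by (rule vanishes_beyond_mult_mat_vec[OF M ep b pCons.hyps(2)])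
    have n2: "vanishes_beyond (h + degree p * h) t v" by (rule vanishes_beyond_mono[OF nv]) simp
    have "vanishes_beyond (h + degree p * h) t (a \<cdot>\<^sub>v v + M *\<^sub>v poly_mat_vec p M v)"
      using n1 n2 M v unfolding vanishes_beyond_def by auto
    then show ?thesis using False M v by (simp add: poly_mat_vec_pCons[OF M v])
  qed
qed

section \<open>A Chebyshev certificate for the residual polynomial\<close>

text \<open>The Chebyshev polynomials \<open>(T\<^sub>j, U\<^sub>j\<^sub>-\<^sub>1)\<close>: \<open>(y + t)\<^sup>j = T\<^sub>j(y) + t U\<^sub>j\<^sub>-\<^sub>1(y)\<close> when \<open>t\<^sup>2 = y\<^sup>2 - 1\<close>.\<close>

primrec chebyshev_pair :: "nat \<Rightarrow> real poly \<times> real poly" where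
  "chebyshev_pair 0 = (1, 0)"
| "chebyshev_pair (Suc j) = ([:0,1:] * fst (chebyshev_pair j) - [:1,0,-1:] * snd (chebyshev_pair j), [:0,1:] * snd (chebyshev_pair j) + fst (chebyshev_pair j))"

lemma chebyshev_pair_degree: "degree (fst (chebyshev_pair j)) \<le> j \<and> (snd (chebyshev_pair j) = 0 \<or> Suc (degree (snd (chebyshev_pair j))) \<le> j)"
proof (induct j)
  case 0 then show ?case by simp
next
  case (Suc j)
  let ?a = "fst (chebyshev_pair j)" and ?b = "snd (chebyshev_pair j)"
  have da: "degree ([:0,1:] * ?a) \<le> Suc j"
    using degree_mult_le[of "[:0,1:]" ?a] Suc by simp
  have db: "degree ([:1,0,-1:] * ?b) \<le> Suc j"
  proof (cases "?b = 0")
    case True then show ?thesis by simp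
  next
    case False
    then have "Suc (degree ?b) \<le> j" using Suc by simp
    moreover have "degree ([:1,0,-1:] * ?b) \<le> 2 + degree ?b"
      using degree_mult_le[of "[:1,0,-1:]" ?b] by simp
    ultimately show ?thesis by simp
  qed
  have d1: "degree (fst (chebyshev_pair (Suc j))) \<le> Suc j"
    using degree_diff_le[OF da db] by simp
  have d2: "Suc (degree (snd (chebyshev_pair (Suc j)))) \<le> Suc j"
  proof -
    have "degree ([:0,1:] * ?b) \<le> j"
    proof (cases "?b = 0")
      case True then show ?thesis by simp
    next
      case False
      then have "Suc (degree ?b) \<le> j" using Suc by simp
      then show ?thesis using degree_mult_le[of "[:0,1:]" ?b] by simp
    qed
    then have "degree ([:0,1:] * ?b + ?a) \<le> j" using Suc degree_add_le by blast
    then show ?thesis by simp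
  qed
  show ?case using d1 d2 by simp
qed

definition eval_pair :: "real \<Rightarrow> 'a::real_field \<Rightarrow> real poly \<times> real poly \<Rightarrow> 'a" where
  "eval_pair y t P = of_real (poly (fst P) y) + t * of_real (poly (snd P) y)"

lemma eval_chebyshev_pair: assumes t: "t^2 = (of_real (y^2 - 1) :: 'a::real_field)"
  shows "eval_pair y t (chebyshev_pair j) = (of_real y + t)^j"
proof (induct j)
  case 0 then show ?case by (simp add: eval_pair_def)
next
  case (Suc j)
  let ?a = "(of_real (poly (fst (chebyshev_pair j)) y) :: 'a)" and ?b = "(of_real (poly (snd (chebyshev_pair j)) y) :: 'a)"
  have "eval_pair y t (chebyshev_pair (Suc j)) = of_real y * ?a - (1 - of_real y^2) * ?b + t * (of_real y * ?b + ?a)"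
    by (simp add: eval_pair_def algebra_simps power2_eq_square)
  also have "\<dots> = (of_real y + t) * (?a + t * ?b)"
  proof -
    have "of_real y * ?a - (1 - of_real y^2) * ?b + t * (of_real y * ?b + ?a) - (of_real y + t) * (?a + t * ?b)
       = ?b * (of_real y^2 - 1 - t^2)" by (simp add: algebra_simps power2_eq_square)
    also have "\<dots> = 0" using t by simp
    finally show ?thesis by simp
  qed
  also have "?a + t * ?b = (of_real y + t)^j" using Suc by (simp add: eval_pair_def)
  finally show ?case by simp
qed

text \<open>Represents \<open>(y + t)\<^sup>k\<^sup>-\<^sup>1\<close>, with \<open>(y + t)\<^sup>-\<^sup>1 = y - t\<close> for \<open>k = 0\<close>.\<close>

definition chebyshev_pair_pred :: "nat \<Rightarrow> real poly \<times> real poly" where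
  "chebyshev_pair_pred k = (if k = 0 then ([:0,1:], -1) else chebyshev_pair (k - 1))"

definition cert_hpoly :: "real \<Rightarrow> nat \<Rightarrow> real poly" where
  "cert_hpoly q k = fst (chebyshev_pair (Suc k)) + Polynomial.smult (2*q) (fst (chebyshev_pair k)) + Polynomial.smult (q^2) (fst (chebyshev_pair_pred k))"

definition cert_gpoly :: "real \<Rightarrow> nat \<Rightarrow> real poly" where
  "cert_gpoly q k = snd (chebyshev_pair (Suc k)) + Polynomial.smult (2*q) (snd (chebyshev_pair k)) + Polynomial.smult (q^2) (snd (chebyshev_pair_pred k))"

lemma degree_cert_hpoly: "degree (cert_hpoly q k) \<le> Suc k"
proof -
  have a: "degree (fst (chebyshev_pair (Suc k))) \<le> Suc k" using chebyshev_pair_degree by blast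
  have b: "degree (Polynomial.smult (2*q) (fst (chebyshev_pair k))) \<le> Suc k" using chebyshev_pair_degree[of k] by simp
  have c: "degree (Polynomial.smult (q^2) (fst (chebyshev_pair_pred k))) \<le> Suc k"
    using chebyshev_pair_degree[of "k-1"] by (auto simp: chebyshev_pair_pred_def)
  show ?thesis unfolding cert_hpoly_def using a b c degree_add_le by metis
qed

lemma eval_cert_polys: assumes t: "t^2 = (of_real (y^2 - 1) :: 'a::real_field)"
  shows "of_real (poly (cert_hpoly q k) y) + t * of_real (poly (cert_gpoly q k) y)
     = (of_real y + t + of_real q)^2 * (of_real y + t)^k * (of_real y - t)"
proof -
  let ?w = "(of_real y + t :: 'a)" and ?w' = "(of_real y - t :: 'a)"
  have ww: "?w * ?w' = 1" using t by (simp add: algebra_simps power2_eq_square)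
  have evm: "eval_pair y t (chebyshev_pair_pred k) = (if k = 0 then ?w' else ?w^(k-1))"
    unfolding chebyshev_pair_pred_def using eval_chebyshev_pair[OF t] by (auto simp: eval_pair_def)
  have "of_real (poly (cert_hpoly q k) y) + t * of_real (poly (cert_gpoly q k) y)
      = eval_pair y t (chebyshev_pair (Suc k)) + 2 * of_real q * eval_pair y t (chebyshev_pair k) + (of_real q)^2 * eval_pair y t (chebyshev_pair_pred k)"
    unfolding cert_hpoly_def cert_gpoly_def eval_pair_def by (simp add: algebra_simps)
  also have "\<dots> = ?w^(Suc k) + 2 * of_real q * ?w^k + (of_real q)^2 * (if k = 0 then ?w' else ?w^(k-1))"
    unfolding eval_chebyshev_pair[OF t] evm ..
  also have "\<dots> = (?w + of_real q)^2 * ?w^k * ?w'"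
  proof (cases k)
    case 0
    have "(?w + of_real q)^2 * ?w^k * ?w' - (?w^(Suc k) + 2 * of_real q * ?w^k + (of_real q)^2 * (if k = 0 then ?w' else ?w^(k-1)))
      = (?w + 2 * of_real q) * (?w * ?w' - 1)" unfolding 0 by (simp add: algebra_simps power2_eq_square)
    also have "\<dots> = 0" using ww by simp
    finally show ?thesis by simp
  next
    case (Suc k')
    have "?w^k * ?w' = ?w^k' * (?w * ?w')" unfolding Suc by (simp add: mult_ac)
    then have "?w^k * ?w' = ?w^k'" using ww by simp
    then have "(?w + of_real q)^2 * ?w^k * ?w' = (?w + of_real q)^2 * ?w^k'" by (simp add: mult.assoc)
    then show ?thesis unfolding Suc by (simp add: algebra_simps power2_eq_square)
  qed
  finally show ?thesis .
qed

lemma cert_polys_norm_identity_field: assumes t: "t^2 = (of_real (y^2 - 1) :: 'a::real_field)"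
  shows "of_real ((poly (cert_hpoly q k) y)^2 + (1 - y^2) * (poly (cert_gpoly q k) y)^2) = (of_real ((1 + q^2 + 2*q*y)^2) :: 'a)"
proof -
  let ?w = "(of_real y + t :: 'a)" and ?w' = "(of_real y - t :: 'a)"
  let ?H = "(of_real (poly (cert_hpoly q k) y) :: 'a)" and ?G = "(of_real (poly (cert_gpoly q k) y) :: 'a)"
  have ww: "?w * ?w' = 1" using t by (simp add: algebra_simps power2_eq_square)
  have t': "(-t)^2 = (of_real (y^2 - 1) :: 'a)" using t by simp
  have e1: "?H + t * ?G = (?w + of_real q)^2 * ?w^k * ?w'" by (rule eval_cert_polys[OF t])
  have e2: "?H - t * ?G = (?w' + of_real q)^2 * ?w'^k * ?w" using eval_cert_polys[OF t'] by simp
  have "?H^2 - t^2 * ?G^2 = (?H + t * ?G) * (?H - t * ?G)" by (simp add: algebra_simps power2_eq_square)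
  also have "\<dots> = ((?w + of_real q) * (?w' + of_real q))^2 * (?w * ?w')^k * (?w * ?w')"
    unfolding e1 e2 power_mult_distrib by (simp add: mult_ac)
  also have "\<dots> = ((?w + of_real q) * (?w' + of_real q))^2" using ww by simp
  also have "(?w + of_real q) * (?w' + of_real q) = ?w * ?w' + of_real q * (?w + ?w') + (of_real q)^2"
    by (simp add: algebra_simps power2_eq_square)
  also have "\<dots> = of_real (1 + q^2 + 2*q*y)" using ww by (simp add: algebra_simps)
  finally show ?thesis using t by (simp add: algebra_simps)
qed

lemma cert_polys_norm_identity: "(poly (cert_hpoly q k) y)^2 + (1 - y^2) * (poly (cert_gpoly q k) y)^2 = (1 + q^2 + 2*q*y)^2"
proof (cases "y^2 \<ge> 1")
  case True
  define t where "t = sqrt (y^2 - 1)"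
  have "t^2 = of_real (y^2 - 1)" using True unfolding t_def by simp
  from cert_polys_norm_identity_field[OF this] show ?thesis by simp
next
  case False
  define t where "t = \<i> * complex_of_real (sqrt (1 - y^2))"
  have "t^2 = of_real (y^2 - 1)" using False unfolding t_def
    by (simp add: power_mult_distrib of_real_power[symmetric] del: of_real_power)
  from cert_polys_norm_identity_field[OF this] show ?thesis by (metis of_real_eq_iff)
qed

lemma cert_hpoly_at_pole: assumes q: "0 < q" "q < 1"
  shows "poly (cert_hpoly q k) (-(1 + q^2)/(2*q)) = (1/q - q)^2 * (-1/q)^k * (-q) / 2"
proof -
  define y where "y = -(1 + q^2)/(2*q)"
  define t where "t = (q^2 - 1)/(2*q)"
  have t: "t^2 = of_real (y^2 - 1)" unfolding t_def y_def using q
    by (simp add: field_simps power2_eq_square)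
  have t': "(-t)^2 = of_real (y^2 - 1)" using t by simp
  have w: "y + t = -1/q" and w': "y - t = -q" unfolding y_def t_def using q by (auto simp: field_simps power2_eq_square)
  have "poly (cert_hpoly q k) y + t * poly (cert_gpoly q k) y = (y + t + q)^2 * (y + t)^k * (y - t)"
    using eval_cert_polys[OF t, of q k] by simp
  also have "\<dots> = (1/q - q)^2 * (-1/q)^k * (-q)" unfolding w w' by (simp add: power2_eq_square algebra_simps)
  finally have e1: "poly (cert_hpoly q k) y + t * poly (cert_gpoly q k) y = (1/q - q)^2 * (-1/q)^k * (-q)" .
  have e2: "poly (cert_hpoly q k) y - t * poly (cert_gpoly q k) y = 0"
    using eval_cert_polys[OF t', of q k] w' by simp
  from e1 e2 show ?thesis unfolding y_def[symmetric] by (simp add: field_simps)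
qed

lemma ratio_q_identity: fixes s q :: real assumes s1: "1 < s" and q: "q = (s - 1)/(s + 1)"
  shows "(1 + q^2)/(2*q) = (s*s+1)/(s*s-1)"
proof -
  have p: "s + 1 > 0" "s - 1 > 0" "s*s - 1 > 0" using s1 by (auto, smt (verit) less_1_mult)
  have q0: "q > 0" unfolding q using p by simp
  have "(1 + q^2) * (s*s-1) = (s*s+1) * (2*q)" unfolding q using p by (simp add: field_simps power2_eq_square)
  then show ?thesis using p q0 by (simp add: frac_eq_eq)
qed

lemma ratio_interval_identity: fixes s lo hi :: real assumes s1: "1 < s" and lo: "lo > 0" and hi: "hi = s^2*lo"
  shows "(lo+hi)/(hi-lo) = (s*s+1)/(s*s-1)"
proof -
  have p: "s*s - 1 > 0" using s1 by (smt (verit) less_1_mult)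
  have "(lo+hi)/(hi-lo) = (lo*(s*s+1))/(lo*(s*s-1))" unfolding hi by (simp add: algebra_simps power2_eq_square)
  then show ?thesis using lo by simp
qed

lemma error_constant_aux: fixes s lo Q :: real assumes s1: "1 < s" and lo: "0 < lo"
  shows "4*((s - 1)/(s + 1))/(lo * (s - 1) * (s + 1)) * (2 * Q) / (4*s/(s+1)^2)^2 = Q*(1+s)^2/(2*s^2*lo)"
proof -
  have p: "s - 1 > 0" "s + 1 > 0" "s > 0" using s1 by auto
  have a: "4*((s - 1)/(s + 1))/(lo * (s - 1) * (s + 1)) = 4/(lo * (s+1)^2)"
  proof -
    have "4*((s - 1)/(s + 1))/(lo * (s - 1) * (s + 1)) = (4 * (s - 1)) / ((lo * (s+1)^2) * (s - 1))"
      by (simp add: power2_eq_square mult_ac)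
    also have "\<dots> = 4/(lo * (s+1)^2)" using p by (rule_tac mult_divide_mult_cancel_right) auto
    finally show ?thesis .
  qed
  have b: "(4*s/(s+1)^2)^2 = 16*s^2/(s+1)^4" by (simp add: power_divide power_mult_distrib)
  define X where "X = (s+1)^2"
  have X: "X > 0" "(s+1)^4 = X^2" "(1+s)^2 = X" unfolding X_def using p by (auto simp: power_mult[symmetric] add.commute)
  have c: "4/(lo * X) * (2 * Q) / (16*s^2/X^2) = Q*X/(2*s^2*lo)"
    using X(1) p lo by (simp add: power2_eq_square field_simps)
  show ?thesis using a b c unfolding X_def[symmetric] X(2,3) by simp
qed

lemma error_constant_value: fixes lo hi s q :: real and k :: nat
  assumes lo: "0 < lo" and s1: "1 < s" and hi: "hi = s^2 * lo" and q: "q = (s - 1)/(s + 1)"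
  shows "(4*q/(hi - lo) / ((1/q - q)^2 * (-1/q)^k * (-q) / 2))^2 = (q^(k+1)*(1+s)^2/(2*s^2*lo))^2"
proof -
  have q0: "q > 0" "q < 1" using s1 unfolding q by (auto simp: field_simps)
  have ne: "s + 1 \<noteq> 0" "1 + (s*s + s*2) \<noteq> 0" using s1 by (auto simp: add_pos_pos) (smt (verit) mult_pos_pos)
  have qq: "1 - q^2 = 4*s/(s+1)^2" unfolding q using s1 ne by (simp add: field_simps power2_eq_square)
  have hl: "hi - lo = lo * (s - 1) * (s + 1)" unfolding hi by (simp add: algebra_simps power2_eq_square)
  have H2: "((1/q - q)^2 * (-1/q)^k * (-q) / 2)^2 = ((1 - q^2)^2 / (2 * q^(k+1)))^2"
  proof -
    have "(1/q - q) = (1 - q^2)/q" using q0 by (simp add: field_simps power2_eq_square)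
    then have "((1/q - q)^2 * (-1/q)^k * (-q) / 2)^2 = ((1 - q^2)^2 / q^2 * (1/q)^k * q / 2)^2"
      by (simp add: power_mult_distrib power_divide power_minus' power2_eq_square)
    also have "\<dots> = ((1 - q^2)^2 / (2 * q^(k+1)))^2" using q0 by (simp add: field_simps power2_eq_square)
    finally show ?thesis .
  qed
  define D where "D = (1/q - q)^2 * (-1/q)^k * (-q) / 2"
  define Dp where "Dp = (1 - q^2)^2 / (2 * q^(k+1))"
  define a where "a = 4*q/(hi - lo)"
  have "(a / D)^2 = a^2 / D^2" by (simp add: power_divide)
  also have "\<dots> = a^2 / Dp^2" using H2 unfolding D_def Dp_def by simp
  also have "\<dots> = (a / Dp)^2" by (simp add: power_divide)
  also have "a / Dp = 4*q/(hi - lo) * (2 * q^(k+1)) / (1 - q^2)^2" unfolding a_def Dp_def by simp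
  also have "4*q/(hi - lo) * (2 * q^(k+1)) / (1 - q^2)^2 = q^(k+1)*(1+s)^2/(2*s^2*lo)"
  proof -
    define Q where "Q = q^(k+1)"
    have "4*q/(lo * (s - 1) * (s + 1)) * (2 * Q) / (4*s/(s+1)^2)^2 = Q*(1+s)^2/(2*s^2*lo)"
      unfolding q by (rule error_constant_aux[OF s1 lo])
    then show ?thesis unfolding qq hl Q_def .
  qed
  finally show ?thesis unfolding a_def D_def .
qed

lemma chebyshev_affine_map:
  fixes lo hi :: real
  assumes lo: "0 < lo" and lh: "lo < hi"
  defines "s \<equiv> sqrt (hi/lo)"
  defines "q \<equiv> (s - 1)/(s + 1)"
  defines "L \<equiv> [:-(lo+hi)/(hi-lo), 2/(hi-lo):]"
  shows "poly L 0 = -(1 + q^2)/(2*q)" and "\<And>x. 1 + q^2 + 2*q*poly L x = 4*q/(hi-lo) * x"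
proof -
  have s1: "s > 1" unfolding s_def using lo lh by simp
  have qd: "q = (s - 1)/(s + 1)" unfolding q_def ..
  have hi: "hi = s^2 * lo" unfolding s_def using lo lh by simp
  have q0: "q > 0" using s1 unfolding q_def by simp
  have fr: "(1 + q^2)/(2*q) = (lo+hi)/(hi-lo)"
    using ratio_q_identity[OF s1 qd] ratio_interval_identity[OF s1 lo hi] by simp
  have "poly L 0 = -(lo+hi)/(hi-lo)" unfolding L_def by simp
  also have "\<dots> = -((lo+hi)/(hi-lo))" by (rule minus_divide_left[symmetric])
  also have "\<dots> = -((1 + q^2)/(2*q))" using fr by simp
  also have "\<dots> = -(1 + q^2)/(2*q)" by (rule minus_divide_left)
  finally show "poly L 0 = -(1 + q^2)/(2*q)" .
  have "1 + q^2 = 2*q*((lo+hi)/(hi-lo))" using fr q0 by (simp add: field_simps)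
  then show "\<And>x. 1 + q^2 + 2*q*poly L x = 4*q/(hi-lo) * x"
    unfolding L_def by (simp add: algebra_simps add_divide_distrib diff_divide_distrib)
qed

lemma residual_poly_factor:
  fixes r :: "real poly"
  assumes r0: "poly r 0 = 1" and dr: "degree r \<le> Suc k"
  obtains p where "degree p \<le> k" "1 - [:0,1:] * p = r"
proof -
  have "poly (1 - r) 0 = 0" using r0 by simp
  then have "[:0,1:] dvd (1 - r)" using poly_eq_0_iff_dvd[of "1 - r" 0] by simp
  then obtain p where p: "1 - r = [:0,1:] * p" by (rule dvdE)
  have d1r: "degree (1 - r) \<le> Suc k" using dr by (intro degree_diff_le) auto
  have "degree p \<le> k"
  proof (cases "p = 0")
    case True then show ?thesis by simp
  next
    case False
    then have "degree ([:0,1:] * p) = 1 + degree p" by (subst degree_mult_eq) auto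
    then show ?thesis using d1r p by simp
  qed
  moreover have "1 - [:0,1:] * p = r" using p by (simp add: algebra_simps)
  ultimately show ?thesis by (rule that)
qed

text \<open>The residual polynomial is \<open>1 - x p(x) = H(L x) / H(L 0)\<close>, with \<open>H\<close> the real part of
  \<open>(w + q)\<^sup>2 w\<^sup>k w\<^sup>-\<^sup>1\<close>. At \<open>L 0 = -(1 + q\<^sup>2)/(2q)\<close> one has \<open>w = -1/q\<close>, so \<open>|H(L 0)|\<close> is of order
  \<open>q\<^sup>-\<^sup>k\<close>; this is the source of the factor \<open>q\<^sup>k\<^sup>+\<^sup>1\<close> in \<open>E\<close>.\<close>

lemma inverse_residual_certificate: fixes lo hi :: real and k :: nat
  assumes lo: "0 < lo" and lh: "lo < hi"
  defines "s \<equiv> sqrt (hi/lo)"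
  defines "q \<equiv> (s - 1)/(s + 1)"
  defines "L \<equiv> [:-(lo+hi)/(hi-lo), 2/(hi-lo):]"
  defines "E \<equiv> q^(k+1)*(1+s)^2/(2*s^2*lo)"
  shows "\<exists>p G c. degree p \<le> k \<and> c \<ge> 0 \<and>
     Polynomial.smult (E^2) ([:0,1:]*[:0,1:]) - (1 - [:0,1:]*p)*(1 - [:0,1:]*p) = Polynomial.smult c (G*G - (L*G)*(L*G))"
proof -
  have s1: "s > 1" unfolding s_def using lo lh by simp
  have qd: "q = (s - 1)/(s + 1)" unfolding q_def ..
  have hi: "hi = s^2 * lo" unfolding s_def using lo lh by simp
  have q0: "q > 0" "q < 1" using s1 unfolding q_def by (auto simp: field_simps)
  note L = chebyshev_affine_map[OF lo lh, folded s_def, folded q_def L_def]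
  define H0 where "H0 = (1/q - q)^2 * (-1/q)^k * (-q) / 2"
  have hy0: "poly (cert_hpoly q k) (poly L 0) = H0" unfolding L(1) H0_def by (rule cert_hpoly_at_pole[OF q0])
  have "q * q < 1 * 1" using q0 by (intro mult_strict_mono) auto
  then have H0nz: "H0 \<noteq> 0" unfolding H0_def using q0 by (simp add: field_simps)
  define lam where "lam = 1 / H0"
  define r where "r = Polynomial.smult lam (pcompose (cert_hpoly q k) L)"
  define G where "G = pcompose (cert_gpoly q k) L"
  define k1 where "k1 = 4*q/(hi-lo)"
  have lin: "\<And>x. 1 + q^2 + 2*q*poly L x = k1 * x" unfolding k1_def by (rule L(2))
  have ev: "(k1 / H0)^2 = E^2" using error_constant_value[OF lo s1 hi qd, of k] unfolding k1_def H0_def E_def .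
  have "lam^2 * k1^2 = (k1/H0)^2" unfolding lam_def by (simp add: power_divide)
  then have E2: "E^2 = lam^2 * k1^2" using ev by simp
  have r0: "poly r 0 = 1" unfolding r_def using hy0 H0nz lam_def by (simp add: poly_pcompose)
  have degL: "degree L \<le> 1" unfolding L_def by simp
  have dr: "degree r \<le> Suc k"
  proof -
    have "degree (pcompose (cert_hpoly q k) L) \<le> degree (cert_hpoly q k) * degree L" by (rule degree_pcompose_le)
    also have "\<dots> \<le> Suc k * 1" using degree_cert_hpoly[of q k] degL by (intro mult_mono) auto
    finally show ?thesis unfolding r_def by simp
  qed
  obtain p where dp: "degree p \<le> k" and rp: "1 - [:0,1:] * p = r" using residual_poly_factor[OF r0 dr] by blast
  have ident: "Polynomial.smult (E^2) ([:0,1:]*[:0,1:]) - r * r = Polynomial.smult (lam^2) (G*G - (L*G)*(L*G))"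
  proof (rule poly_eq_poly_eq_iff[THEN iffD1], rule ext)
    fix x :: real
    define l where "l = poly L x"
    have ci: "(poly (cert_hpoly q k) l)^2 = (k1 * x)^2 - (1 - l^2) * (poly (cert_gpoly q k) l)^2"
      using cert_polys_norm_identity[of q k l] lin[of x] unfolding l_def by (simp add: algebra_simps)
    have "poly (Polynomial.smult (E^2) ([:0,1:]*[:0,1:]) - r * r) x = E^2 * x^2 - lam^2 * (poly (cert_hpoly q k) l)^2"
      unfolding r_def l_def by (simp add: poly_pcompose power2_eq_square algebra_simps)
    also have "\<dots> = lam^2 * ((1 - l^2) * (poly (cert_gpoly q k) l)^2)" unfolding ci E2 by (simp add: algebra_simps)
    also have "\<dots> = poly (Polynomial.smult (lam^2) (G*G - (L*G)*(L*G))) x"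
      unfolding G_def l_def by (simp add: poly_pcompose power2_eq_square algebra_simps)
    finally show "poly (Polynomial.smult (E^2) ([:0,1:]*[:0,1:]) - r * r) x = poly (Polynomial.smult (lam^2) (G*G - (L*G)*(L*G))) x" .
  qed
  show ?thesis
    by (rule exI[of _ p], rule exI[of _ G], rule exI[of _ "lam^2"]) (use dp ident rp in auto)
qed

section \<open>Exponential decay of solutions of banded positive definite systems\<close>

lemma transpose_smult_mat: "transpose_mat (c \<cdot>\<^sub>m (B::real mat)) = c \<cdot>\<^sub>m transpose_mat B"
  by (intro eq_matI) auto

lemma smult_unit_vec_norm: "t < n \<Longrightarrow> (\<beta> \<cdot>\<^sub>v unit_vec n t) \<bullet> (\<beta> \<cdot>\<^sub>v unit_vec n t) = (\<beta>::real)^2"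
  by (simp add: power2_eq_square)

lemma coercive_unit_solution_entry_le:
  fixes lo :: real
  assumes M: "M \<in> carrier_mat n n" and lo: "0 < lo"
    and form: "\<And>w. w \<in> carrier_vec n \<Longrightarrow> lo * (w \<bullet> w) \<le> w \<bullet> (M *\<^sub>v w)"
    and y: "y \<in> carrier_vec n" and t: "t < n" and eq: "M *\<^sub>v y = \<beta> \<cdot>\<^sub>v unit_vec n t" and s: "s < n"
  shows "\<bar>y $ s\<bar> \<le> \<bar>\<beta>\<bar> / lo"
proof -
  have ys: "y $ s ^ 2 \<le> y \<bullet> y" using vec_index_sq_le[of s y] y s by simp
  have My: "(M *\<^sub>v y) \<bullet> (M *\<^sub>v y) = \<beta>^2" unfolding eq using smult_unit_vec_norm[OF t] .
  have cs: "(y \<bullet> (M *\<^sub>v y))^2 \<le> (y \<bullet> y) * \<beta>^2"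
    using cauchy_schwarz_scalar_prod[of y n "M *\<^sub>v y"] y M My by simp
  have yy: "y \<bullet> y \<ge> 0" by (rule scalar_prod_self_nonneg)
  have "(lo * (y \<bullet> y))^2 \<le> (y \<bullet> (M *\<^sub>v y))^2"
    using form[OF y] yy lo by (intro power_mono) auto
  then have "lo^2 * (y \<bullet> y) * (y \<bullet> y) \<le> \<beta>^2 * (y \<bullet> y)" using cs by (simp add: power2_eq_square algebra_simps)
  then have "lo^2 * (y \<bullet> y) \<le> \<beta>^2 \<or> y \<bullet> y = 0" using yy
    by (metis mult_right_le_imp_le order_le_less)
  then have "lo^2 * (y $ s)^2 \<le> \<beta>^2" using ys yy lo
    by (metis (no_types, opaque_lifting) dual_order.trans mult_left_mono mult_zero_right power2_eq_square
        zero_le_power2 order.refl mult_eq_0_iff le_zero_eq)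
  then have "(lo * \<bar>y $ s\<bar>)^2 \<le> \<bar>\<beta>\<bar>^2" by (simp add: power_mult_distrib)
  then have "lo * \<bar>y $ s\<bar> \<le> \<bar>\<beta>\<bar>" using lo by (meson abs_ge_zero power2_le_imp_le)
  then show ?thesis using lo by (simp add: field_simps)
qed

lemma scalar_rayleigh_unit_solution_offdiag:
  assumes M: "M \<in> carrier_mat n n" "symmetric_mat M" and lo: "lo \<noteq> 0"
    and form: "\<And>w. w \<in> carrier_vec n \<Longrightarrow> w \<bullet> (M *\<^sub>v w) = lo * (w \<bullet> w)"
    and y: "y \<in> carrier_vec n" and eq: "M *\<^sub>v y = \<beta> \<cdot>\<^sub>v unit_vec n t" and s: "s < n" "s \<noteq> t"
  shows "y $ s = 0"
proof -
  define C where "C = M - lo \<cdot>\<^sub>m 1\<^sub>m n"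
  have Cc: "C \<in> carrier_mat n n" unfolding C_def using M by auto
  have Cv: "\<And>w. w \<in> carrier_vec n \<Longrightarrow> C *\<^sub>v w = M *\<^sub>v w - lo \<cdot>\<^sub>v w"
    unfolding C_def using M by (subst minus_mult_distrib_mat_vec[of _ n n]) (auto simp: smult_one_mat_mult_vec)
  have sC: "symmetric_mat C"
    using M unfolding C_def symmetric_mat_def by (simp add: transpose_minus[of _ n n] transpose_smult_one_mat)
  have C0: "w \<bullet> (C *\<^sub>v w) = 0" if w: "w \<in> carrier_vec n" for w
    using w M form[OF w] by (simp add: Cv scalar_prod_minus_distrib[of _ n])
  have "(C *\<^sub>v y) \<bullet> (C *\<^sub>v y) \<le> 1 * (y \<bullet> (C *\<^sub>v y))"
    by (rule psd_mat_vec_norm_le[OF Cc sC _ _ y]) (simp_all add: C0 scalar_prod_self_nonneg)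
  then have "(C *\<^sub>v y) \<bullet> (C *\<^sub>v y) = 0" using C0[OF y] scalar_prod_self_nonneg[of "C *\<^sub>v y"] by linarith
  then have "C *\<^sub>v y = 0\<^sub>v n" using scalar_prod_self_eq_0D[of "C *\<^sub>v y" n] Cc y by auto
  then have "(C *\<^sub>v y) $ s = 0" using s by simp
  then have "(M *\<^sub>v y) $ s - lo * y $ s = 0" using Cv[OF y] s y M by simp
  then show "y $ s = 0" using eq s lo by (simp add: unit_vec_def)
qed

lemma affine_rescaled_mat_vec_norm_le:
  assumes M: "M \<in> carrier_mat n n" "symmetric_mat M" and lh: "lo < hi"
    and form: "\<And>w. w \<in> carrier_vec n \<Longrightarrow> lo*(w \<bullet> w) \<le> w \<bullet> (M *\<^sub>v w) \<and> w \<bullet> (M *\<^sub>v w) \<le> hi*(w \<bullet> w)"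
    and u: "u \<in> carrier_vec n"
  defines "L \<equiv> [:-(lo+hi)/(hi-lo), 2/(hi-lo):]"
  shows "poly_mat_vec L M u \<bullet> poly_mat_vec L M u \<le> u \<bullet> u"
proof -
  define c0 where "c0 = -(lo+hi)/(hi-lo)"
  define c1 where "c1 = 2/(hi-lo)"
  define Cm where "Cm = c0 \<cdot>\<^sub>m 1\<^sub>m n + c1 \<cdot>\<^sub>m M"
  have Cc: "Cm \<in> carrier_mat n n" unfolding Cm_def using M by auto
  have Cv0: "\<And>w. w \<in> carrier_vec n \<Longrightarrow> Cm *\<^sub>v w = c0 \<cdot>\<^sub>v w + c1 \<cdot>\<^sub>v (M *\<^sub>v w)"
    unfolding Cm_def using M
      by (subst add_mult_distrib_mat_vec[of _ n n]) (auto simp: smult_one_mat_mult_vec intro!: eq_vecI)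
  have Cv: "\<And>w. w \<in> carrier_vec n \<Longrightarrow> Cm *\<^sub>v w = poly_mat_vec L M w"
  proof -
    fix w :: "real vec" assume w: "w \<in> carrier_vec n"
    have "Cm *\<^sub>v w = c0 \<cdot>\<^sub>v w + c1 \<cdot>\<^sub>v (M *\<^sub>v w)" by (rule Cv0[OF w])
    also have "\<dots> = poly_mat_vec L M w" unfolding L_def c0_def c1_def using M w
      by (simp add: poly_mat_vec_pCons[OF M(1) w] poly_mat_vec_const[OF M(1) w] mult_mat_vec[OF M(1) w])
    finally show "Cm *\<^sub>v w = poly_mat_vec L M w" .
  qed
  have sC: "symmetric_mat Cm" using M unfolding Cm_def symmetric_mat_def
    by (simp add: transpose_add[of _ n n] transpose_smult_one_mat transpose_smult_mat)
  have fC: "\<And>w. w \<in> carrier_vec n \<Longrightarrow> \<bar>w \<bullet> (Cm *\<^sub>v w)\<bar> \<le> 1 * (w \<bullet> w)"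
  proof -
    fix w :: "real vec" assume w: "w \<in> carrier_vec n"
    have e: "w \<bullet> (Cm *\<^sub>v w) = c0 * (w \<bullet> w) + c1 * (w \<bullet> (M *\<^sub>v w))"
      unfolding Cv0[OF w] using M w by (simp add: scalar_prod_add_distrib[of _ n])
    have hl: "hi - lo > 0" using lh by simp
    have ww: "w \<bullet> w \<ge> 0" by (rule scalar_prod_self_nonneg)
    define Q where "Q = w \<bullet> (M *\<^sub>v w)"
    have f: "lo * (w \<bullet> w) \<le> Q" "Q \<le> hi * (w \<bullet> w)" using form[OF w] unfolding Q_def by auto
    have a0: "c0 * (hi - lo) = -(lo+hi)" "c1 * (hi - lo) = 2" unfolding c0_def c1_def using hl by (auto simp: field_simps)
    have "(c0 * (w \<bullet> w) + c1 * Q) * (hi - lo) = (c0 * (hi - lo)) * (w \<bullet> w) + (c1 * (hi - lo)) * Q"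
      by (simp add: algebra_simps)
    also have "\<dots> = 2 * Q - (lo + hi) * (w \<bullet> w)" unfolding a0 by (simp add: algebra_simps)
    finally have "(c0 * (w \<bullet> w) + c1 * Q) * (hi - lo) = 2 * Q - (lo + hi) * (w \<bullet> w)" .
    then have "c0 * (w \<bullet> w) + c1 * Q = (2 * Q - (lo + hi) * (w \<bullet> w)) / (hi - lo)"
      using hl by (simp add: eq_divide_eq)
    moreover have "\<bar>2 * Q - (lo + hi) * (w \<bullet> w)\<bar> \<le> (hi - lo) * (w \<bullet> w)" using f by (simp add: abs_le_iff algebra_simps)
    ultimately have "\<bar>c0 * (w \<bullet> w) + c1 * Q\<bar> \<le> (w \<bullet> w)" using hl by (simp add: abs_div divide_le_eq mult.commute)
    then show "\<bar>w \<bullet> (Cm *\<^sub>v w)\<bar> \<le> 1 * (w \<bullet> w)" unfolding e Q_def by simp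
  qed
  have "(Cm *\<^sub>v u) \<bullet> (Cm *\<^sub>v u) \<le> 1^2 * (u \<bullet> u)" by (rule mat_vec_norm_le_quadratic_form_bound[OF Cc sC _ fC u]) simp
  then show ?thesis unfolding Cv[OF u] by simp
qed

lemma poly_mat_vec_self_scalar_prod:
  assumes M: "M \<in> carrier_mat n n" "symmetric_mat M" and y: "y \<in> carrier_vec n"
  shows "y \<bullet> poly_mat_vec (p * p) M y = poly_mat_vec p M y \<bullet> poly_mat_vec p M y"
proof -
  have "y \<bullet> poly_mat_vec (p * p) M y = y \<bullet> poly_mat_vec p M (poly_mat_vec p M y)"
    by (simp add: poly_mat_vec_mult[OF M(1) y])
  also have "\<dots> = poly_mat_vec p M y \<bullet> poly_mat_vec p M y"
    by (rule poly_mat_vec_symmetric[OF M(1) M(2) y]) (use M y in simp)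
  finally show ?thesis .
qed

text \<open>A polynomial identity \<open>E\<^sup>2x\<^sup>2 - r\<^sup>2 = c (G\<^sup>2 - (L G)\<^sup>2)\<close> becomes an inequality between quadratic
  forms, because \<open>L(M)\<close> is a contraction.\<close>

lemma residual_norm_le_certificate:
  assumes M: "M \<in> carrier_mat n n" "symmetric_mat M" and y: "y \<in> carrier_vec n"
    and L: "\<And>u. u \<in> carrier_vec n \<Longrightarrow> poly_mat_vec L M u \<bullet> poly_mat_vec L M u \<le> u \<bullet> u"
    and c: "c \<ge> 0"
    and cert: "Polynomial.smult (E^2) ([:0,1:]*[:0,1:]) - r * r = Polynomial.smult c (G*G - (L*G)*(L*G))"
  shows "poly_mat_vec r M y \<bullet> poly_mat_vec r M y \<le> E^2 * ((M *\<^sub>v y) \<bullet> (M *\<^sub>v y))"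
proof -
  note selfsq = poly_mat_vec_self_scalar_prod[OF M y]
  define u where "u = poly_mat_vec G M y"
  have u: "u \<in> carrier_vec n" unfolding u_def using M y by simp
  have lhs: "y \<bullet> poly_mat_vec (Polynomial.smult (E^2) ([:0,1:]*[:0,1:]) - r * r) M y
      = E^2 * ((M *\<^sub>v y) \<bullet> (M *\<^sub>v y)) - poly_mat_vec r M y \<bullet> poly_mat_vec r M y"
  proof -
    have "y \<bullet> poly_mat_vec ([:0,1:]*[:0,1:]) M y = (M *\<^sub>v y) \<bullet> (M *\<^sub>v y)"
      using selfsq[of "[:0,1:]"] by (simp add: poly_mat_vec_x[OF M(1) y])
    moreover have "poly_mat_vec (Polynomial.smult (E^2) ([:0,1:]*[:0,1:]) - r * r) M y
        = E^2 \<cdot>\<^sub>v poly_mat_vec ([:0,1:]*[:0,1:]) M y - poly_mat_vec (r*r) M y"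
      by (simp only: poly_mat_vec_diff[OF M(1) y] poly_mat_vec_smult[OF M(1) y])
    ultimately show ?thesis using M y selfsq[of r]
      by (simp add: scalar_prod_minus_distrib[of _ n])
  qed
  have rhs: "y \<bullet> poly_mat_vec (Polynomial.smult c (G*G - (L*G)*(L*G))) M y
      = c * (u \<bullet> u - poly_mat_vec L M u \<bullet> poly_mat_vec L M u)"
  proof -
    have "poly_mat_vec (L*G) M y = poly_mat_vec L M u" unfolding u_def by (rule poly_mat_vec_mult[OF M(1) y])
    moreover have "poly_mat_vec (Polynomial.smult c (G*G - (L*G)*(L*G))) M y
        = c \<cdot>\<^sub>v (poly_mat_vec (G*G) M y - poly_mat_vec ((L*G)*(L*G)) M y)"
      by (simp only: poly_mat_vec_diff[OF M(1) y] poly_mat_vec_smult[OF M(1) y])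
    ultimately show ?thesis using M y selfsq[of G] selfsq[of "L*G"] unfolding u_def[symmetric]
      by (simp add: scalar_prod_minus_distrib[of _ n])
  qed
  have "0 \<le> c * (u \<bullet> u - poly_mat_vec L M u \<bullet> poly_mat_vec L M u)" using c L[OF u] by simp
  then show ?thesis using lhs rhs cert by simp
qed

text \<open>\<open>p(M)\<close> has bandwidth \<open>deg p \<cdot> H\<close>, so far from \<open>t\<close> the solution of \<open>M y = \<beta> e\<^sub>t\<close> agrees with
  the residual \<open>y - p(M) M y = r(M) y\<close>.\<close>

lemma unit_solution_entry_eq_residual:
  assumes M: "M \<in> carrier_mat n n" "bandwidth_le H M"
    and y: "y \<in> carrier_vec n" and eq: "M *\<^sub>v y = \<beta> \<cdot>\<^sub>v unit_vec n t" and s: "s < n"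
    and far: "degree p * H < nat \<bar>int t - int s\<bar>"
  shows "y $ s = poly_mat_vec (1 - [:0,1:]*p) M y $ s"
proof -
  define r where "r = 1 - [:0,1:]*p"
  have et: "unit_vec n t \<in> carrier_vec n" by simp
  have dec: "y = poly_mat_vec r M y + \<beta> \<cdot>\<^sub>v poly_mat_vec p M (unit_vec n t)"
  proof -
    have "y = poly_mat_vec (r + [:0,1:]*p) M y" unfolding r_def using poly_mat_vec_one[OF M(1) y] by simp
    also have "\<dots> = poly_mat_vec r M y + poly_mat_vec (p * [:0,1:]) M y"
      by (simp add: poly_mat_vec_add[OF M(1) y] mult.commute)
    also have "poly_mat_vec (p * [:0,1:]) M y = poly_mat_vec p M (M *\<^sub>v y)"
      unfolding poly_mat_vec_mult[OF M(1) y] poly_mat_vec_x[OF M(1) y] ..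
    also have "\<dots> = \<beta> \<cdot>\<^sub>v poly_mat_vec p M (unit_vec n t)"
      unfolding eq by (rule poly_mat_vec_smult_right[OF M(1) et])
    finally show ?thesis .
  qed
  have "vanishes_beyond (degree p * H) t (poly_mat_vec p M (unit_vec n t))"
    by (rule poly_mat_vec_vanishes_beyond[OF M et]) (auto simp: vanishes_beyond_def unit_vec_def)
  moreover have "s + degree p * H < t \<or> t + degree p * H < s" using far by linarith
  ultimately have "poly_mat_vec p M (unit_vec n t) $ s = 0" using s M unfolding vanishes_beyond_def by auto
  then show ?thesis using arg_cong[OF dec, of "\<lambda>v. v $ s"] s y M unfolding r_def by simp
qed

lemma chebyshev_error_le_decay:
  fixes lo \<kappa> :: real and H d :: nat
  assumes lo: "0 < lo" and \<kappa>: "1 < \<kappa>" and H: "H \<ge> 1" and d: "d \<noteq> 0"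
  defines "q \<equiv> (sqrt \<kappa> - 1)/(sqrt \<kappa> + 1)"
  defines "\<tau> \<equiv> (1/lo) * max 1 ((1 + sqrt \<kappa>)^2/(2*\<kappa>))"
  shows "q^((d - 1) div H + 1) * (1 + sqrt \<kappa>)^2 / (2 * (sqrt \<kappa>)^2 * lo) \<le> \<tau> * (q powr (1/real H)) ^ d"
proof -
  define k where "k = (d - 1) div H"
  have ratio: "0 < (x - 1)/(x + 1) \<and> (x - 1)/(x + 1) < 1" if "1 < x" for x :: real using that by auto
  have "1 < sqrt \<kappa>" using \<kappa> by simp
  from ratio[OF this] have qpos: "q > 0" "q < 1" unfolding q_def by blast+
  have sk2: "(sqrt \<kappa>)^2 = \<kappa>" using \<kappa> by simp
  have \<tau>: "\<tau> \<ge> 0" unfolding \<tau>_def using lo by simp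
  have "q^(k+1) * (1 + sqrt \<kappa>)^2 / (2 * (sqrt \<kappa>)^2 * lo) = q^(k+1) * ((1/lo) * ((1 + sqrt \<kappa>)^2/(2*\<kappa>)))"
    unfolding sk2 by (simp add: field_simps)
  also have "\<dots> \<le> q^(k+1) * \<tau>"
  proof -
    have "(1/lo) * ((1 + sqrt \<kappa>)^2/(2*\<kappa>)) \<le> \<tau>"
      unfolding \<tau>_def by (rule mult_left_mono[OF max.cobounded2]) (use lo in simp)
    then show ?thesis by (rule mult_left_mono) (use qpos in simp)
  qed
  also have "\<dots> \<le> (q powr (1 / real H)) ^ d * \<tau>"
  proof (rule mult_right_mono[OF _ \<tau>])
    have "d \<le> H * (k + 1)"
    proof -
      have "H * ((d - 1) div H) + (d - 1) mod H = d - 1" by (rule mult_div_mod_eq)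
      moreover have "(d - 1) mod H < H" using H by simp
      ultimately have "d \<le> H * ((d - 1) div H) + H" using d by linarith
      then show ?thesis unfolding k_def by (simp add: algebra_simps)
    qed
    then have "real d \<le> real (k + 1) * real H" by (metis of_nat_le_iff of_nat_mult mult.commute)
    then have dH: "real d / real H \<le> real (k + 1)" using H by (simp add: divide_le_eq)
    have "q^(k+1) = q powr real (k+1)" using qpos(1) by (rule powr_realpow[symmetric])
    also have "\<dots> \<le> q powr (real d / real H)" by (rule powr_mono'[OF dH]) (use qpos in auto)
    also have "q powr (real d / real H) = (q powr (1 / real H)) powr real d" by (simp add: powr_powr)
    also have "\<dots> = (q powr (1 / real H)) ^ d" using qpos by (simp add: powr_realpow)
    finally show "q^(k+1) \<le> (q powr (1 / real H)) ^ d" .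
  qed
  finally show ?thesis unfolding k_def by (simp add: mult.commute)
qed

lemma chebyshev_unit_solution_entry_le:
  fixes lo hi \<beta> :: real and k H :: nat
  assumes M: "M \<in> carrier_mat n n" "symmetric_mat M" "bandwidth_le H M" and lo: "0 < lo" and lh: "lo < hi"
    and form: "\<And>w. w \<in> carrier_vec n \<Longrightarrow> lo*(w \<bullet> w) \<le> w \<bullet> (M *\<^sub>v w) \<and> w \<bullet> (M *\<^sub>v w) \<le> hi*(w \<bullet> w)"
    and y: "y \<in> carrier_vec n" and t: "t < n" and eq: "M *\<^sub>v y = \<beta> \<cdot>\<^sub>v unit_vec n t" and s: "s < n"
    and far: "k * H < nat \<bar>int t - int s\<bar>"
  defines "\<kappa> \<equiv> hi/lo"
  defines "q \<equiv> (sqrt \<kappa> - 1)/(sqrt \<kappa> + 1)"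
  shows "\<bar>y $ s\<bar> \<le> q^(k+1)*(1 + sqrt \<kappa>)^2/(2*(sqrt \<kappa>)^2*lo) * \<bar>\<beta>\<bar>"
proof -
  define E where "E = q^(k+1)*(1 + sqrt \<kappa>)^2/(2*(sqrt \<kappa>)^2*lo)"
  define L where "L = [:-(lo+hi)/(hi-lo), 2/(hi-lo):]"
  obtain p G c where pG: "degree p \<le> k" "c \<ge> 0"
    "Polynomial.smult (E^2) ([:0,1:]*[:0,1:]) - (1 - [:0,1:]*p)*(1 - [:0,1:]*p)
      = Polynomial.smult c (G*G - (L*G)*(L*G))"
    using inverse_residual_certificate[OF lo lh, of k] unfolding E_def L_def \<kappa>_def q_def by blast
  have "degree p * H < nat \<bar>int t - int s\<bar>" using mult_le_mono1[OF pG(1), of H] far by linarith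
  note residual = unit_solution_entry_eq_residual[OF M(1,3) y eq s this]
  have L_contr: "\<And>u. u \<in> carrier_vec n \<Longrightarrow> poly_mat_vec L M u \<bullet> poly_mat_vec L M u \<le> u \<bullet> u"
    unfolding L_def by (rule affine_rescaled_mat_vec_norm_le[OF M(1,2) lh form])
  have "(y $ s)^2 = (poly_mat_vec (1 - [:0,1:]*p) M y $ s)^2" by (simp only: residual)
  also have "\<dots> \<le> poly_mat_vec (1 - [:0,1:]*p) M y \<bullet> poly_mat_vec (1 - [:0,1:]*p) M y"
    by (rule vec_index_sq_le) (use s y M in simp)
  also have "\<dots> \<le> E^2 * ((M *\<^sub>v y) \<bullet> (M *\<^sub>v y))"
    by (rule residual_norm_le_certificate[OF M(1,2) y L_contr pG(2,3)])
  also have "\<dots> = (E * \<bar>\<beta>\<bar>)^2" unfolding eq smult_unit_vec_norm[OF t] by (simp add: power_mult_distrib)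
  finally have sq: "\<bar>y $ s\<bar>^2 \<le> (E * \<bar>\<beta>\<bar>)^2" by simp
  have "sqrt \<kappa> > 1" unfolding \<kappa>_def using lo lh by simp
  then have "0 \<le> E" unfolding E_def q_def using lo by simp
  then have "0 \<le> E * \<bar>\<beta>\<bar>" by simp
  with sq show ?thesis unfolding E_def by (rule power2_le_imp_le)
qed

lemma banded_solution_decay:
  fixes n H :: nat and M :: "real mat" and lo hi \<beta> :: real
  assumes M: "M \<in> carrier_mat n n" "symmetric_mat M" "bandwidth_le H M" and H: "H \<ge> 1"
    and lo: "0 < lo" "lo \<le> hi"
    and form: "\<And>w. w \<in> carrier_vec n \<Longrightarrow> lo*(w \<bullet> w) \<le> w \<bullet> (M *\<^sub>v w) \<and> w \<bullet> (M *\<^sub>v w) \<le> hi*(w \<bullet> w)"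
    and y: "y \<in> carrier_vec n" and t: "t < n" and eq: "M *\<^sub>v y = \<beta> \<cdot>\<^sub>v unit_vec n t"
    and s: "s < n"
  shows "\<bar>y $ s\<bar> \<le> \<bar>\<beta>\<bar> * ((1/lo) * max 1 ((1 + sqrt(hi/lo))^2/(2*(hi/lo))))
        * (((sqrt(hi/lo) - 1)/(sqrt(hi/lo)+1)) powr (1/real H)) ^ (nat \<bar>int t - int s\<bar>)"
proof -
  define \<kappa> where "\<kappa> = hi/lo"
  define q where "q = (sqrt \<kappa> - 1)/(sqrt \<kappa> + 1)"
  define \<tau> where "\<tau> = (1/lo) * max 1 ((1 + sqrt \<kappa>)^2/(2*\<kappa>))"
  define \<rho> where "\<rho> = q powr (1/real H)"
  define d where "d = nat \<bar>int t - int s\<bar>"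
  have \<tau>: "1/lo \<le> \<tau>" unfolding \<tau>_def using lo by (simp add: field_simps)
  have "\<bar>y $ s\<bar> \<le> \<bar>\<beta>\<bar> * \<tau> * \<rho> ^ d"
  proof (cases "d = 0")
    case True
    have "\<bar>y $ s\<bar> \<le> \<bar>\<beta>\<bar> / lo"
      by (rule coercive_unit_solution_entry_le[OF M(1) lo(1) _ y t eq s]) (use form in blast)
    moreover have "\<bar>\<beta>\<bar> / lo \<le> \<bar>\<beta>\<bar> * \<tau>" using mult_left_mono[OF \<tau> abs_ge_zero[of \<beta>]] by simp
    ultimately have "\<bar>y $ s\<bar> \<le> \<bar>\<beta>\<bar> * \<tau>" by linarith
    then show ?thesis using True by simp
  next
    case d: False
    show ?thesis
    proof (cases "lo = hi")
      case True
      have "lo \<noteq> 0" using lo by simp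
      moreover have "w \<bullet> (M *\<^sub>v w) = lo * (w \<bullet> w)" if "w \<in> carrier_vec n" for w
        using form[OF that] unfolding True[symmetric] by linarith
      moreover have "s \<noteq> t" using d unfolding d_def by auto
      ultimately have "y $ s = 0" by (rule scalar_rayleigh_unit_solution_offdiag[OF M(1,2) _ _ y eq s])
      moreover have "0 < 1/lo" using lo by simp
      then have "0 \<le> \<tau>" using \<tau> by linarith
      moreover have "0 \<le> \<rho>" unfolding \<rho>_def by simp
      ultimately show ?thesis by simp
    next
      case False
      then have lh: "lo < hi" using lo by simp
      then have \<kappa>: "1 < \<kappa>" unfolding \<kappa>_def using lo by simp
      define k where "k = (d - 1) div H"
      have "k * H \<le> d - 1" unfolding k_def by (simp add: div_times_less_eq_dividend)
      then have far: "k * H < nat \<bar>int t - int s\<bar>" using d unfolding d_def by linarith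
      have E: "q^(k+1)*(1 + sqrt \<kappa>)^2/(2*(sqrt \<kappa>)^2*lo) \<le> \<tau> * \<rho> ^ d"
        using chebyshev_error_le_decay[OF lo(1) \<kappa> H d] unfolding k_def \<tau>_def \<rho>_def q_def .
      have "\<bar>y $ s\<bar> \<le> q^(k+1)*(1 + sqrt \<kappa>)^2/(2*(sqrt \<kappa>)^2*lo) * \<bar>\<beta>\<bar>"
        using chebyshev_unit_solution_entry_le[OF M lo(1) lh form y t eq s far] unfolding \<kappa>_def q_def .
      also have "\<dots> \<le> \<tau> * \<rho> ^ d * \<bar>\<beta>\<bar>" using E by (rule mult_right_mono) simp
      finally show ?thesis by (simp add: mult_ac)
    qed
  qed
  then show ?thesis unfolding \<tau>_def \<rho>_def d_def q_def \<kappa>_def .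
qed

section \<open>The Lyapunov operator in column-stacked coordinates\<close>

lemma sum_lessThan_mult_blocks: fixes n K :: nat shows "(\<Sum>u<n*K. f u) = (\<Sum>j<n. \<Sum>i<K. f (j*K + i) :: real)"
proof -
  have "(\<Sum>u<n*K. f u) = (\<Sum>j<n. sum f {j*K..<j*K+K})" using sum.nat_group[of f K n] by simp
  also have "\<dots> = (\<Sum>j<n. \<Sum>i<K. f (j*K + i))"
  proof (rule sum.cong[OF refl])
    fix j
    have "sum f {0 + j*K..<K + j*K} = (\<Sum>i\<in>{0..<K}. f (i + j*K))" by (rule sum.shift_bounds_nat_ivl)
    then show "sum f {j*K..<j*K+K} = (\<Sum>i<K. f (j*K + i))" by (simp add: add.commute lessThan_atLeast0)
  qed
  finally show ?thesis .
qed

definition col_stack :: "nat \<Rightarrow> real mat \<Rightarrow> real vec" where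
  "col_stack K X = vec (K*K) (\<lambda>u. X $$ (u mod K, u div K))"

definition unstack :: "nat \<Rightarrow> real vec \<Rightarrow> real mat" where
  "unstack K w = mat K K (\<lambda>(i,j). w $ (j*K + i))"

text \<open>The matrix of \<open>X \<mapsto> -(A X + X A)\<close> on column-stacked matrices, i.e.
  \<open>-(I \<otimes> A + A\<^sup>T \<otimes> I)\<close>.\<close>

definition lyapunov_mat :: "nat \<Rightarrow> real mat \<Rightarrow> real mat" where
  "lyapunov_mat K A = mat (K*K) (K*K) (\<lambda>(u,v). - ((if u div K = v div K then A $$ (u mod K, v mod K) else 0)
      + (if u mod K = v mod K then A $$ (v div K, u div K) else 0)))"

lemma block_index_less: "i < K \<Longrightarrow> j < K \<Longrightarrow> j*K + i < K*(K::nat)"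
proof -
  assume i: "i < K" and j: "j < K"
  have "j*K + i < j*K + K" using i by simp
  also have "\<dots> = (j+1)*K" by simp
  also have "\<dots> \<le> K*K" using j by (intro mult_le_mono1) simp
  finally show ?thesis .
qed

lemma block_index_mod: "i < K \<Longrightarrow> (j*K + i) mod K = (i::nat)" by simp

lemma block_index_div: "i < K \<Longrightarrow> (j*K + i) div K = (j::nat)" by simp

lemma mod_div_less_square: "u < K*(K::nat) \<Longrightarrow> u mod K < K \<and> u div K < K"
  by (metis less_mult_imp_div_less mod_less_divisor mult_eq_0_iff bot_nat_0.not_eq_extremum less_nat_zero_code)

lemma col_stack_carrier[simp]: "col_stack K X \<in> carrier_vec (K*K)" unfolding col_stack_def by simp

lemma dim_col_stack[simp]: "dim_vec (col_stack K X) = K*K" unfolding col_stack_def by simp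

lemma index_col_stack[simp]: "u < K*K \<Longrightarrow> col_stack K X $ u = X $$ (u mod K, u div K)" unfolding col_stack_def by simp

lemma col_stack_unstack: assumes w: "w \<in> carrier_vec (K*K)" shows "col_stack K (unstack K w) = w"
proof (rule eq_vecI)
  fix u assume "u < dim_vec w"
  then have u: "u < K*K" using w by simp
  then have "u mod K < K" "u div K < K" using mod_div_less_square by auto
  then show "col_stack K (unstack K w) $ u = w $ u" using u unfolding unstack_def
    by (simp add: mult.commute[of "u div K"] )
qed (use w in simp)

lemma unstack_carrier[simp]: "unstack K w \<in> carrier_mat K K" unfolding unstack_def by simp

lemma sum_col_stack_indices: fixes K :: nat shows "(\<Sum>u\<in>{0..<K*K}. f u) = (\<Sum>j<K. \<Sum>i<K. f (j*K + i) :: real)"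
  using sum_lessThan_mult_blocks[where n=K and K=K and f=f] by (simp add: lessThan_atLeast0)

lemma col_stack_scalar_prod: assumes X: "X \<in> carrier_mat K K" and Y: "Y \<in> carrier_mat K K"
  shows "col_stack K X \<bullet> col_stack K Y = (\<Sum>j<K. \<Sum>i<K. X $$ (i,j) * Y $$ (i,j))"
proof -
  have "col_stack K X \<bullet> col_stack K Y = (\<Sum>u\<in>{0..<K*K}. X $$ (u mod K, u div K) * Y $$ (u mod K, u div K))"
    unfolding scalar_prod_def by (intro sum.cong) auto
  also have "\<dots> = (\<Sum>j<K. \<Sum>i<K. X $$ (i,j) * Y $$ (i,j))"
    unfolding sum_col_stack_indices by (intro sum.cong refl) (simp add: block_index_mod block_index_div)
  finally show ?thesis .
qed

lemma sum_delta_outer: fixes K :: nat shows "j0 < K \<Longrightarrow> (\<Sum>j<K. \<Sum>i<K. (if j0 = j then F i j else 0)) = (\<Sum>i<K. F i j0 :: real)"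
proof -
  assume j0: "j0 < K"
  have "(\<Sum>j<K. \<Sum>i<K. (if j0 = j then F i j else 0)) = (\<Sum>j<K. if j0 = j then (\<Sum>i<K. F i j) else 0)"
    by (intro sum.cong refl) auto
  also have "\<dots> = (\<Sum>i<K. F i j0)" using j0 by (subst sum.delta') auto
  finally show ?thesis .
qed

lemma sum_delta_inner: fixes K :: nat assumes "i0 < K" shows " (\<Sum>j<K. \<Sum>i<K. (if i0 = i then G i j else 0)) = (\<Sum>j<K. G i0 j :: real)"
proof (intro sum.cong refl)
  fix x
  show "(\<Sum>i<K. if i0 = i then G i x else 0) = G i0 x" using assms by (subst sum.delta') auto
qed

lemma lyapunov_mat_carrier[simp]: "lyapunov_mat K A \<in> carrier_mat (K*K) (K*K)" unfolding lyapunov_mat_def by simp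

lemma lyapunov_mat_col_stack: assumes A: "A \<in> carrier_mat K K" and X: "X \<in> carrier_mat K K"
  shows "lyapunov_mat K A *\<^sub>v col_stack K X = - col_stack K (A * X + X * A)"
proof (rule eq_vecI)
  fix u assume "u < dim_vec (- col_stack K (A * X + X * A))"
  then have u: "u < K*K" by simp
  define i0 where "i0 = u mod K"
  define j0 where "j0 = u div K"
  have ij0: "i0 < K" "j0 < K" using mod_div_less_square[OF u] unfolding i0_def j0_def by auto
  have "(lyapunov_mat K A *\<^sub>v col_stack K X) $ u = (\<Sum>v\<in>{0..<K*K}. lyapunov_mat K A $$ (u,v) * X $$ (v mod K, v div K))"
    using u unfolding lyapunov_mat_def by (auto simp: scalar_prod_def intro!: sum.cong)
  also have "\<dots> = (\<Sum>j<K. \<Sum>i<K. - ((if j0 = j then A $$ (i0, i) * X $$ (i,j) else 0) + (if i0 = i then A $$ (j, j0) * X $$ (i,j) else 0)))"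
    unfolding sum_col_stack_indices
  proof (intro sum.cong refl)
    fix j i assume j: "j \<in> {..<K}" and i: "i \<in> {..<K}"
    have "j*K + i < K*K" using block_index_less i j by simp
    then show "lyapunov_mat K A $$ (u, j*K + i) * X $$ ((j*K + i) mod K, (j*K + i) div K) =
        - ((if j0 = j then A $$ (i0, i) * X $$ (i,j) else 0) + (if i0 = i then A $$ (j, j0) * X $$ (i,j) else 0))"
      using u i unfolding lyapunov_mat_def i0_def j0_def by (simp add: block_index_mod block_index_div algebra_simps)
  qed
  also have "\<dots> = - ((\<Sum>i<K. A $$ (i0, i) * X $$ (i,j0)) + (\<Sum>j<K. A $$ (j, j0) * X $$ (i0,j)))"
  proof -
    have "(\<Sum>j<K. \<Sum>i<K. - ((if j0 = j then A $$ (i0, i) * X $$ (i,j) else 0) + (if i0 = i then A $$ (j, j0) * X $$ (i,j) else 0)))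
      = - (\<Sum>j<K. \<Sum>i<K. (if j0 = j then A $$ (i0, i) * X $$ (i,j) else 0)) - (\<Sum>j<K. \<Sum>i<K. (if i0 = i then A $$ (j, j0) * X $$ (i,j) else 0))"
      by (simp only: sum_negf sum.distrib minus_add_distrib sum_subtractf diff_conv_add_uminus)
    then show ?thesis by (simp only: sum_delta_outer[OF ij0(2)] sum_delta_inner[OF ij0(1)])
  qed
  also have "\<dots> = (- col_stack K (A * X + X * A)) $ u"
  proof -
    have e1: "(- col_stack K (A * X + X * A)) $ u = - ((A * X + X * A) $$ (i0, j0))" using u unfolding i0_def j0_def by simp
    have e2: "(A * X + X * A) $$ (i0, j0) = (\<Sum>i<K. A $$ (i0, i) * X $$ (i,j0)) + (\<Sum>j<K. A $$ (j, j0) * X $$ (i0,j))"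
      using A X ij0 by (simp add: scalar_prod_def lessThan_atLeast0 mult.commute)
    show ?thesis unfolding e1 e2 by simp
  qed
  finally show "(lyapunov_mat K A *\<^sub>v col_stack K X) $ u = (- col_stack K (A * X + X * A)) $ u" .
qed (simp add: lyapunov_mat_def)

lemma col_stack_add: "X \<in> carrier_mat K K \<Longrightarrow> Y \<in> carrier_mat K K \<Longrightarrow> col_stack K (X + Y) = col_stack K X + col_stack K Y"
proof (intro eq_vecI)
  fix u assume X: "X \<in> carrier_mat K K" and Y: "Y \<in> carrier_mat K K" and "u < dim_vec (col_stack K X + col_stack K Y)"
  then have u: "u < K*K" by simp
  then show "col_stack K (X + Y) $ u = (col_stack K X + col_stack K Y) $ u" using mod_div_less_square[OF u] X Y by simp
qed simp

lemma symmetric_mat_entry: "A \<in> carrier_mat K K \<Longrightarrow> symmetric_mat A \<Longrightarrow> a < K \<Longrightarrow> b < K \<Longrightarrow> A $$ (a,b) = A $$ (b,a)"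
  unfolding symmetric_mat_def by (metis index_transpose_mat(1) carrier_matD)

lemma col_stack_scalar_prod_mult_left:
  assumes A: "A \<in> carrier_mat K K" and W: "W \<in> carrier_mat K K"
  shows "col_stack K W \<bullet> col_stack K (A * W) = (\<Sum>j<K. col W j \<bullet> (A *\<^sub>v col W j))"
  unfolding col_stack_scalar_prod[OF W mult_carrier_mat[OF A W]]
proof (intro sum.cong refl)
  fix j assume j: "j \<in> {..<K}"
  have "col W j \<bullet> (A *\<^sub>v col W j) = (\<Sum>i\<in>{0..<K}. col W j $ i * (A *\<^sub>v col W j) $ i)"
    unfolding scalar_prod_def[of "col W j"] using A by simp
  also have "\<dots> = (\<Sum>i<K. W $$ (i, j) * (A * W) $$ (i, j))"
    unfolding lessThan_atLeast0 using j A W by (intro sum.cong refl) auto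
  finally show "(\<Sum>i<K. W $$ (i, j) * (A * W) $$ (i, j)) = col W j \<bullet> (A *\<^sub>v col W j)" by simp
qed

lemma col_stack_scalar_prod_mult_right:
  assumes A: "A \<in> carrier_mat K K" "symmetric_mat A" and W: "W \<in> carrier_mat K K"
  shows "col_stack K W \<bullet> col_stack K (W * A) = (\<Sum>i<K. row W i \<bullet> (A *\<^sub>v row W i))"
  unfolding col_stack_scalar_prod[OF W mult_carrier_mat[OF W A(1)]]
  unfolding sum.swap[of "\<lambda>j i. W $$ (i, j) * (W * A) $$ (i, j)"]
proof (intro sum.cong refl)
  fix i assume i: "i \<in> {..<K}"
  have rc: "row W i \<bullet> col A j = row A j \<bullet> row W i" if j: "j < K" for j
  proof -
    have "col A j = row A j"
      using A j by (intro eq_vecI) (auto simp: symmetric_mat_entry)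
    moreover have "row W i \<bullet> row A j = row A j \<bullet> row W i"
      by (rule comm_scalar_prod[of _ K]) (use A W in auto)
    ultimately show ?thesis by simp
  qed
  have "row W i \<bullet> (A *\<^sub>v row W i) = (\<Sum>j\<in>{0..<K}. row W i $ j * (A *\<^sub>v row W i) $ j)"
    unfolding scalar_prod_def[of "row W i"] using A by simp
  also have "\<dots> = (\<Sum>j<K. W $$ (i, j) * (W * A) $$ (i, j))"
    unfolding lessThan_atLeast0 using i A W rc by (intro sum.cong refl) auto
  finally show "(\<Sum>j<K. W $$ (i, j) * (W * A) $$ (i, j)) = row W i \<bullet> (A *\<^sub>v row W i)" by simp
qed

lemma col_stack_scalar_prod_self:
  assumes W: "W \<in> carrier_mat K K"
  shows "col_stack K W \<bullet> col_stack K W = (\<Sum>j<K. col W j \<bullet> col W j)"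
    and "col_stack K W \<bullet> col_stack K W = (\<Sum>i<K. row W i \<bullet> row W i)"
proof -
  have cc: "\<And>j. j < K \<Longrightarrow> col W j \<bullet> col W j = (\<Sum>i<K. W $$ (i,j) * W $$ (i,j))"
    using W unfolding scalar_prod_def lessThan_atLeast0 by (auto intro!: sum.cong)
  have rr: "\<And>i. i < K \<Longrightarrow> row W i \<bullet> row W i = (\<Sum>j<K. W $$ (i,j) * W $$ (i,j))"
    using W unfolding scalar_prod_def lessThan_atLeast0 by (auto intro!: sum.cong)
  show "col_stack K W \<bullet> col_stack K W = (\<Sum>j<K. col W j \<bullet> col W j)"
    unfolding col_stack_scalar_prod[OF W W] by (intro sum.cong refl) (simp add: cc)
  show "col_stack K W \<bullet> col_stack K W = (\<Sum>i<K. row W i \<bullet> row W i)"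
    unfolding col_stack_scalar_prod[OF W W] sum.swap[of "\<lambda>j i. W $$ (i, j) * W $$ (i, j)"]
    by (intro sum.cong refl) (simp add: rr)
qed

lemma lyapunov_mat_quadratic_form:
  assumes A: "A \<in> carrier_mat K K" "symmetric_mat A" and W: "W \<in> carrier_mat K K"
  shows "col_stack K W \<bullet> (lyapunov_mat K A *\<^sub>v col_stack K W)
    = - ((\<Sum>j<K. col W j \<bullet> (A *\<^sub>v col W j)) + (\<Sum>i<K. row W i \<bullet> (A *\<^sub>v row W i)))"
proof -
  have AW: "A * W \<in> carrier_mat K K" "W * A \<in> carrier_mat K K" using A W by auto
  have "col_stack K W \<bullet> (lyapunov_mat K A *\<^sub>v col_stack K W)
      = col_stack K W \<bullet> (- (col_stack K (A * W) + col_stack K (W * A)))"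
    unfolding lyapunov_mat_col_stack[OF A(1) W] col_stack_add[OF AW] ..
  also have "\<dots> = - (col_stack K W \<bullet> (col_stack K (A * W) + col_stack K (W * A)))"
    by (rule scalar_prod_uminus_right) simp
  also have "col_stack K W \<bullet> (col_stack K (A * W) + col_stack K (W * A))
      = col_stack K W \<bullet> col_stack K (A * W) + col_stack K W \<bullet> col_stack K (W * A)"
    by (rule scalar_prod_add_distrib[of _ "K*K"]) auto
  finally show ?thesis
    unfolding col_stack_scalar_prod_mult_left[OF A(1) W] col_stack_scalar_prod_mult_right[OF A W] .
qed

lemma lyapunov_mat_rayleigh_bounds: assumes A: "A \<in> carrier_mat K K" "symmetric_mat A" and K: "K > 0" and w: "w \<in> carrier_vec (K*K)"
  shows "(-2 * lambda_max A) * (w \<bullet> w) \<le> w \<bullet> (lyapunov_mat K A *\<^sub>v w) \<and> w \<bullet> (lyapunov_mat K A *\<^sub>v w) \<le> (-2 * lambda_min A) * (w \<bullet> w)"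
proof -
  define W where "W = unstack K w"
  have Wc: "W \<in> carrier_mat K K" unfolding W_def by simp
  have wW: "w = col_stack K W" unfolding W_def using col_stack_unstack[OF w] by simp
  note q = lyapunov_mat_quadratic_form[OF A Wc, folded wW] col_stack_scalar_prod_self[OF Wc, folded wW]
  note rb = rayleigh_quotient_bounds[OF A K]
  have c1: "(\<Sum>j<K. col W j \<bullet> (A *\<^sub>v col W j)) \<le> lambda_max A * (w \<bullet> w)"
    unfolding q(2) sum_distrib_left by (rule sum_mono) (use rb(2) Wc in simp)
  have c2: "(\<Sum>i<K. row W i \<bullet> (A *\<^sub>v row W i)) \<le> lambda_max A * (w \<bullet> w)"
    unfolding q(3) sum_distrib_left by (rule sum_mono) (use rb(2) Wc in simp)
  have c3: "lambda_min A * (w \<bullet> w) \<le> (\<Sum>j<K. col W j \<bullet> (A *\<^sub>v col W j))"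
    unfolding q(2) sum_distrib_left by (rule sum_mono) (use rb(3) Wc in simp)
  have c4: "lambda_min A * (w \<bullet> w) \<le> (\<Sum>i<K. row W i \<bullet> (A *\<^sub>v row W i))"
    unfolding q(3) sum_distrib_left by (rule sum_mono) (use rb(3) Wc in simp)
  show ?thesis unfolding q(1) using c1 c2 c3 c4 by linarith
qed

lemma symmetric_lyapunov_mat: assumes A: "A \<in> carrier_mat K K" "symmetric_mat A" shows "symmetric_mat (lyapunov_mat K A)"
  unfolding symmetric_mat_def
proof (rule eq_matI)
  fix u v assume u: "u < dim_row (lyapunov_mat K A)" and v: "v < dim_col (lyapunov_mat K A)"
  then have u': "u < K*K" and v': "v < K*K" by (auto simp: lyapunov_mat_def)
  note um = mod_div_less_square[OF u'] and vm = mod_div_less_square[OF v']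
  show "transpose_mat (lyapunov_mat K A) $$ (u, v) = lyapunov_mat K A $$ (u, v)"
  proof -
    have e1: "A $$ (v mod K, u mod K) = A $$ (u mod K, v mod K)" using symmetric_mat_entry[OF A] um vm by blast
    have e2: "A $$ (u div K, v div K) = A $$ (v div K, u div K)" using symmetric_mat_entry[OF A] um vm by blast
    have "transpose_mat (lyapunov_mat K A) $$ (u, v) = lyapunov_mat K A $$ (v, u)" using u' v' by (simp add: lyapunov_mat_def)
    also have "\<dots> = lyapunov_mat K A $$ (u, v)" using u' v' unfolding lyapunov_mat_def by (simp add: e1 e2 eq_commute[of "v div K"] eq_commute[of "v mod K"])
    finally show ?thesis .
  qed
qed (auto simp: lyapunov_mat_def)

lemma banded_nonzero_entry: assumes A: "A \<in> carrier_mat K K" and b: "banded m A" and m: "even m"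
  and i: "i < K" and j: "j < K" and nz: "A $$ (i,j) \<noteq> 0"
  shows "i \<le> j + m div 2 \<and> j \<le> i + m div 2"
proof -
  have "\<not> real m / 2 < \<bar>real i - real j\<bar>" using b nz i j A unfolding banded_def by auto
  moreover have "real m / 2 = real (m div 2)" using m by (auto elim!: evenE)
  ultimately show ?thesis by linarith
qed

lemma lyapunov_mat_bandwidth: assumes A: "A \<in> carrier_mat K K" and b: "banded m A" and m: "even m"
  shows "bandwidth_le (K * (m div 2)) (lyapunov_mat K A)"
  unfolding bandwidth_le_def
proof (intro allI impI)
  fix u v assume u: "u < dim_row (lyapunov_mat K A)" and v: "v < dim_col (lyapunov_mat K A)"
    and uv: "u + K * (m div 2) < v \<or> v + K * (m div 2) < u"
  then have u': "u < K*K" and v': "v < K*K" by (auto simp: lyapunov_mat_def)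
  note um = mod_div_less_square[OF u'] and vm = mod_div_less_square[OF v']
  define md where "md = m div 2"
  have K0: "K \<ge> 1" using u' by (cases K) auto
  have eu: "u = u div K * K + u mod K" and ev: "v = v div K * K + v mod K" by simp_all
  have mdK: "md \<le> K * md" using K0 by simp
  have t1: "(if u div K = v div K then A $$ (u mod K, v mod K) else 0) = 0"
  proof (rule ccontr)
    assume "\<not> ?thesis"
    then have d: "u div K = v div K" and nz: "A $$ (u mod K, v mod K) \<noteq> 0" by (auto split: if_splits)
    from banded_nonzero_entry[OF A b m _ _ nz] um vm have "u mod K \<le> v mod K + md" "v mod K \<le> u mod K + md"
      unfolding md_def by auto
    moreover have "u div K * K = v div K * K" using d by simp
    ultimately show False using uv eu ev mdK unfolding md_def by linarith
  qed
  have t2: "(if u mod K = v mod K then A $$ (v div K, u div K) else 0) = 0"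
  proof (rule ccontr)
    assume "\<not> ?thesis"
    then have d: "u mod K = v mod K" and nz: "A $$ (v div K, u div K) \<noteq> 0" by (auto split: if_splits)
    from banded_nonzero_entry[OF A b m _ _ nz] um vm have h: "v div K \<le> u div K + md" "u div K \<le> v div K + md"
      unfolding md_def by auto
    have "v div K * K \<le> (u div K + md) * K" using h(1) by (rule mult_le_mono1)
    moreover have "u div K * K \<le> (v div K + md) * K" using h(2) by (rule mult_le_mono1)
    ultimately have "v div K * K \<le> u div K * K + md * K" "u div K * K \<le> v div K * K + md * K"
      by (simp_all add: add_mult_distrib)
    moreover have "md * K = K * (m div 2)" unfolding md_def by simp
    ultimately show False using uv eu ev d by linarith
  qed
  show "lyapunov_mat K A $$ (u, v) = 0" using u' v' t1 t2 by (simp add: lyapunov_mat_def)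
qed

lemma rank_one_entry: assumes i: "i < K" and j: "j < K" and r: "r < K" and c: "c < K"
  shows "(qcol K i * (p \<cdot>\<^sub>m transpose_mat (qcol K j))) $$ (r,c) = (if r = i \<and> c = j then p else 0)"
  using i j r c by (simp add: qcol_def scalar_prod_def mat_of_cols_def)

lemma col_stack_rank_one: assumes i: "i < K" and j: "j < K"
  shows "col_stack K (qcol K i * (p \<cdot>\<^sub>m transpose_mat (qcol K j))) = p \<cdot>\<^sub>v unit_vec (K*K) (phi K i j)"
proof (rule eq_vecI)
  fix u assume "u < dim_vec (p \<cdot>\<^sub>v unit_vec (K*K) (phi K i j))"
  then have u: "u < K*K" by simp
  note um = mod_div_less_square[OF u]
  have "(u mod K = i \<and> u div K = j) = (u = phi K i j)"
  proof
    assume "u mod K = i \<and> u div K = j"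
    then show "u = phi K i j" unfolding phi_def by (metis div_mult_mod_eq)
  next
    assume "u = phi K i j"
    then show "u mod K = i \<and> u div K = j" unfolding phi_def using i by simp
  qed
  then show "col_stack K (qcol K i * (p \<cdot>\<^sub>m transpose_mat (qcol K j))) $ u = (p \<cdot>\<^sub>v unit_vec (K*K) (phi K i j)) $ u"
    using u um rank_one_entry[OF i j] by (simp add: unit_vec_def)
qed simp

section \<open>Decay of the solutions of the Lyapunov equation\<close>

lemma lyapunov_mat_unit_solution_decay:
  assumes K: "K \<ge> 1" and m: "m > 0" "even m"
    and A: "A \<in> carrier_mat K K" "symmetric_mat A" "negative_definite A" "banded m A"
    and y: "y \<in> carrier_vec (K*K)" and t: "t < K*K"
    and eq: "lyapunov_mat K A *\<^sub>v y = \<beta> \<cdot>\<^sub>v unit_vec (K*K) t" and s: "s < K*K"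
  shows "\<bar>y $ s\<bar> \<le> \<bar>\<beta>\<bar> * tau1 (lambda_min A) (lambda_max A)
           * rho1 K m (lambda_min A) (lambda_max A) ^ nat \<bar>int t - int s\<bar>"
proof -
  have K0: "K > 0" using K by simp
  define a where "a = lambda_min A"
  define b where "b = lambda_max A"
  have ab: "a \<le> b" "b < 0"
    unfolding a_def b_def using negative_definite_lambda_bounds[OF A(1-3) K0] by auto
  define lo where "lo = -2*b"
  define hi where "hi = -2*a"
  define H where "H = K * (m div 2)"
  have lo: "0 < lo" "lo \<le> hi" unfolding lo_def hi_def using ab by auto
  have H: "H \<ge> 1" unfolding H_def using K m by (auto elim!: evenE)
  have bandwidth: "bandwidth_le H (lyapunov_mat K A)"
    unfolding H_def by (rule lyapunov_mat_bandwidth[OF A(1,4) m(2)])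
  have form: "\<And>w. w \<in> carrier_vec (K*K) \<Longrightarrow>
      lo*(w \<bullet> w) \<le> w \<bullet> (lyapunov_mat K A *\<^sub>v w) \<and> w \<bullet> (lyapunov_mat K A *\<^sub>v w) \<le> hi*(w \<bullet> w)"
    unfolding lo_def hi_def a_def b_def using lyapunov_mat_rayleigh_bounds[OF A(1,2) K0] by blast
  have hl: "hi/lo = a/b" unfolding hi_def lo_def by simp
  have tau: "(1/lo) * max 1 ((1 + sqrt(hi/lo))^2/(2*(hi/lo))) = tau1 a b"
    unfolding tau1_def Let_def hl using ab unfolding lo_def by simp
  have "1 / real H = 2 / real (K * m)" unfolding H_def using m(2) by (auto elim!: evenE)
  then have rho: "((sqrt(hi/lo) - 1)/(sqrt(hi/lo)+1)) powr (1/real H) = rho1 K m a b"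
    unfolding rho1_def Let_def hl by simp
  show ?thesis
    using banded_solution_decay[OF lyapunov_mat_carrier symmetric_lyapunov_mat[OF A(1,2)] bandwidth H lo
        form y t eq s]
    unfolding tau rho a_def b_def .
qed

lemma lyapunov_mat_inverse_entry_decay:
  assumes K: "K \<ge> 1" and m: "m > 0" "even m"
    and A: "A \<in> carrier_mat K K" "symmetric_mat A" "negative_definite A" "banded m A"
  obtains D where "D \<in> carrier_mat (K*K) (K*K)" "D * lyapunov_mat K A = 1\<^sub>m (K*K)"
    "\<And>s t. s < K*K \<Longrightarrow> t < K*K \<Longrightarrow>
       \<bar>D $$ (s,t)\<bar> \<le> tau1 (lambda_min A) (lambda_max A) * rho1 K m (lambda_min A) (lambda_max A) ^ nat \<bar>int t - int s\<bar>"
proof -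
  have K0: "K > 0" using K by simp
  have "det (lyapunov_mat K A) \<noteq> 0"
  proof
    assume "det (lyapunov_mat K A) = 0"
    then obtain v where v: "v \<in> carrier_vec (K*K)" "v \<noteq> 0\<^sub>v (K*K)" "lyapunov_mat K A *\<^sub>v v = 0\<^sub>v (K*K)"
      using det_0_iff_vec_prod_zero[OF lyapunov_mat_carrier] by blast
    have "(-2 * lambda_max A) * (v \<bullet> v) \<le> 0"
      using lyapunov_mat_rayleigh_bounds[OF A(1,2) K0 v(1)] v(1,3) by simp
    moreover have "lambda_max A < 0" by (rule negative_definite_lambda_bounds(2)[OF A(1-3) K0])
    ultimately have "v \<bullet> v \<le> 0" by (simp add: zero_le_mult_iff)
    then show False using scalar_prod_self_pos[OF v(1,2)] by simp
  qed
  then obtain D where D: "D \<in> carrier_mat (K*K) (K*K)" "D * lyapunov_mat K A = 1\<^sub>m (K*K)"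
      "lyapunov_mat K A * D = 1\<^sub>m (K*K)"
    using obtain_inverse_mat[OF lyapunov_mat_carrier] by metis
  show ?thesis
  proof (rule that[OF D(1,2)])
    fix s t assume s: "s < K*K" and t: "t < K*K"
    define y where "y = D *\<^sub>v unit_vec (K*K) t"
    have y: "y \<in> carrier_vec (K*K)" unfolding y_def using D by simp
    have "(lyapunov_mat K A * D) *\<^sub>v unit_vec (K*K) t = lyapunov_mat K A *\<^sub>v y"
      unfolding y_def by (rule assoc_mult_mat_vec[OF lyapunov_mat_carrier D(1)]) simp
    then have "lyapunov_mat K A *\<^sub>v y = 1 \<cdot>\<^sub>v unit_vec (K*K) t" using D(3) by simp
    then have "\<bar>y $ s\<bar> \<le> \<bar>1\<bar> * tau1 (lambda_min A) (lambda_max A)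
        * rho1 K m (lambda_min A) (lambda_max A) ^ nat \<bar>int t - int s\<bar>"
      by (rule lyapunov_mat_unit_solution_decay[OF K m A y t _ s])
    moreover have "y $ s = D $$ (s,t)" unfolding y_def using D s t by simp
    ultimately show "\<bar>D $$ (s,t)\<bar> \<le> tau1 (lambda_min A) (lambda_max A)
        * rho1 K m (lambda_min A) (lambda_max A) ^ nat \<bar>int t - int s\<bar>" by simp
  qed
qed

lemma rank_one_lyapunov_solution_decay:
  assumes K: "K \<ge> 1" and m: "m > 0" "even m"
    and A: "A \<in> carrier_mat K K" "symmetric_mat A" "negative_definite A" "banded m A"
    and i: "i < K" and j: "j < K" and X: "X \<in> carrier_mat K K"
    and eq: "A * X + X * A = qcol K i * (p \<cdot>\<^sub>m transpose_mat (qcol K j))" and s: "s < K^2"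
  shows "\<bar>vec_entry K X s\<bar> \<le> \<bar>p\<bar> * tau1 (lambda_min A) (lambda_max A) *
           rho1 K m (lambda_min A) (lambda_max A) ^ nat \<bar>int (phi K i j) - int s\<bar>"
proof -
  have s': "s < K*K" using s by (simp add: power2_eq_square)
  have t: "phi K i j < K*K" unfolding phi_def using block_index_less[OF i j] by simp
  have "lyapunov_mat K A *\<^sub>v col_stack K X = - col_stack K (A * X + X * A)"
    by (rule lyapunov_mat_col_stack[OF A(1) X])
  also have "\<dots> = (- p) \<cdot>\<^sub>v unit_vec (K*K) (phi K i j)"
    unfolding eq col_stack_rank_one[OF i j] by (intro eq_vecI) auto
  finally have "\<bar>col_stack K X $ s\<bar> \<le> \<bar>- p\<bar> * tau1 (lambda_min A) (lambda_max A) *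
      rho1 K m (lambda_min A) (lambda_max A) ^ nat \<bar>int (phi K i j) - int s\<bar>"
    by (rule lyapunov_mat_unit_solution_decay[OF K m A col_stack_carrier t _ s'])
  then show ?thesis unfolding vec_entry_def using s' by simp
qed

lemma lyapunov_solution_decay:
  assumes K: "K \<ge> 1" and m: "m > 0" "even m"
    and A: "A \<in> carrier_mat K K" "symmetric_mat A" "negative_definite A" "banded m A"
    and X: "X \<in> carrier_mat K K" and eq: "A * X + X * A = P" and s: "s < K^2"
  shows "\<bar>vec_entry K X s\<bar> \<le> tau1 (lambda_min A) (lambda_max A) *
           (\<Sum>i<K. \<Sum>j<K. \<bar>P $$ (i, j)\<bar> * rho1 K m (lambda_min A) (lambda_max A) ^ nat \<bar>int (phi K i j) - int s\<bar>)"
proof -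
  define \<tau> where "\<tau> = tau1 (lambda_min A) (lambda_max A)"
  define \<rho> where "\<rho> = rho1 K m (lambda_min A) (lambda_max A)"
  have s': "s < K*K" using s by (simp add: power2_eq_square)
  obtain D where D: "D \<in> carrier_mat (K*K) (K*K)" "D * lyapunov_mat K A = 1\<^sub>m (K*K)"
    and Dst: "\<And>t. t < K*K \<Longrightarrow> \<bar>D $$ (s,t)\<bar> \<le> \<tau> * \<rho> ^ nat \<bar>int t - int s\<bar>"
    using lyapunov_mat_inverse_entry_decay[OF K m A] s' unfolding \<tau>_def \<rho>_def by metis
  have "col_stack K X = (D * lyapunov_mat K A) *\<^sub>v col_stack K X" unfolding D(2) by simp
  also have "\<dots> = D *\<^sub>v (lyapunov_mat K A *\<^sub>v col_stack K X)"
    by (rule assoc_mult_mat_vec[OF D(1) lyapunov_mat_carrier]) simp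
  also have "lyapunov_mat K A *\<^sub>v col_stack K X = - col_stack K P"
    unfolding lyapunov_mat_col_stack[OF A(1) X] eq ..
  finally have "col_stack K X $ s = (\<Sum>t\<in>{0..<K*K}. D $$ (s,t) * (- (col_stack K P $ t)))"
    using D s' by (simp add: scalar_prod_def)
  then have "\<bar>col_stack K X $ s\<bar> \<le> (\<Sum>t\<in>{0..<K*K}. \<bar>D $$ (s,t)\<bar> * \<bar>col_stack K P $ t\<bar>)"
    by (simp add: abs_mult order_trans[OF sum_abs])
  also have "\<dots> \<le> (\<Sum>t\<in>{0..<K*K}. \<tau> * \<rho> ^ nat \<bar>int t - int s\<bar> * \<bar>col_stack K P $ t\<bar>)"
    by (intro sum_mono mult_right_mono Dst) auto
  also have "\<dots> = \<tau> * (\<Sum>j<K. \<Sum>i<K. \<bar>P $$ (i,j)\<bar> * \<rho> ^ nat \<bar>int (phi K i j) - int s\<bar>)"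
    unfolding sum_col_stack_indices sum_distrib_left
    by (intro sum.cong refl) (simp add: block_index_less block_index_mod block_index_div phi_def mult_ac)
  also have "\<dots> = \<tau> * (\<Sum>i<K. \<Sum>j<K. \<bar>P $$ (i,j)\<bar> * \<rho> ^ nat \<bar>int (phi K i j) - int s\<bar>)"
    by (subst sum.swap) rule
  finally show ?thesis unfolding vec_entry_def \<tau>_def \<rho>_def using s' by simp
qed

theorem theorem1:
  fixes K m :: nat and A P :: "real mat"
  assumes K: "K \<ge> 1"
    and m: "m > 0" "even m"
    and A: "A \<in> carrier_mat K K" "symmetric_mat A" "negative_definite A" "banded m A"
    and P: "P \<in> carrier_mat K K"
  shows "(\<forall>i<K. \<forall>j<K. \<forall>Xij \<in> carrier_mat K K.
            A * Xij + Xij * A = qcol K i * (P $$ (i, j) \<cdot>\<^sub>m transpose_mat (qcol K j)) \<longrightarrow>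
            (\<forall>s<K^2. \<bar>vec_entry K Xij s\<bar> \<le>
               \<bar>P $$ (i, j)\<bar> * tau1 (lambda_min A) (lambda_max A) *
               rho1 K m (lambda_min A) (lambda_max A) ^ nat \<bar>int (phi K i j) - int s\<bar>))
       \<and> (\<forall>X \<in> carrier_mat K K. A * X + X * A = P \<longrightarrow>
            (\<forall>s<K^2. \<bar>vec_entry K X s\<bar> \<le>
               tau1 (lambda_min A) (lambda_max A) *
               (\<Sum>i<K. \<Sum>j<K. \<bar>P $$ (i, j)\<bar> *
                  rho1 K m (lambda_min A) (lambda_max A) ^ nat \<bar>int (phi K i j) - int s\<bar>)))"
  by (auto intro: rank_one_lyapunov_solution_decay[OF K m A] lyapunov_solution_decay[OF K m A])

end
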